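(* Let $k$ be a field of characteristic $p>0$ and $A=k[x_1,\dots,x_r]/(x_1^p,\dots,x_r^p)$ with the Lie Hopf structure $\Delta_{\mathrm{Lie}}$. Then the homomorphism $\Phi_{\Delta_{\mathrm{Lie}}}\colon\operatorname{Ext}^*_A(k,k)\to\operatorname{Ext}^*_{A^e}(A,A)$ satisfies \[ \Phi_{\Delta_{\mathrm{Lie}}}(\eta_i)=\delta_i\quad\text{and}\quad\Phi_{\Delta_{\mathrm{Lie}}}(\zeta_i)=\chi_i\qquad(i=1,\dots,r). \]
   Context: The Lie Hopf structure (restricted enveloping algebra of the abelian restricted Lie algebra $k^r$ with trivial $p$-power map): $\Delta_{\mathrm{Lie}}(x_i)=x_i\otimes1+1\otimes x_i$, antipode $\sigma_{\mathrm{Lie}}(x_i)=-x_i$. $A^e=A\otimes_kA^{op}$; $\Phi_\Delta\colon\operatorname{Ext}^*_A(k,k)\to\operatorname{Ext}^*_{A^e}(A,A)$ is induced by the functor $X\mapsto X\otimes_kA$ from $A$-modules to $A^e$-modules with action $(\alpha\otimes\beta)(x\otimes a)=\sum_{(\alpha)}\alpha_1x\otimes\alpha_2a\beta$ (exact, preserves projectives, sends $k$ to $A$; $\Phi_\Delta$ applies it to a projective resolution of $k$ and to cocycles). Resolutions and classes: for $A_i=k[x_i]/(x_i^p)$, let $P^{(i)}_*$ be $\cdots\to A_i\xrightarrow{x_i}A_i\xrightarrow{x_i^{p-1}}A_i\xrightarrow{x_i}A_i\to0$ augmented to $k$; $P_*=P^{(1)}_*\otimes_k\cdots\otimes_kP^{(r)}_*$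 resolves $k$ over $A$, with summands $P_{j_1,\dots,j_r}\cong A$. $\hat\eta_i$ (resp. $\hat\zeta_i$) is the cochain $P_*\to k$ equal to the augmentation on $P_{j_1,\dots,j_r}$ with $j_i=1$ (resp. $2$), $j_\ell=0$ for $\ell\ne i$, zero elsewhere; $\eta_i,\zeta_i$ are their classes in $\operatorname{Ext}^*_A(k,k)$. With $A_i^e=k[y_i,z_i]/(y_i^p,z_i^p)$, $y_i=x_i\otimes1$, $z_i=1\otimes x_i$, $Q^{(i)}_*$ is $\cdots\to A_i^e\xrightarrow{y_i-z_i}A_i^e\xrightarrow{(y_i-z_i)^{p-1}}A_i^e\xrightarrow{y_i-z_i}A_i^e\to0$ augmented by multiplication to $A_i$; $Q_*=\bigotimes_i Q^{(i)}_*$ resolves $A$ over $A^e$ with summands $Q_{j_1,\dots,j_r}\cong A^e$. $\hat\delta_i$ (resp. $\hat\chi_i$) is the cochain $Q_*\to A$ equal to multiplication $A^e\to A$ on $Q_{j_1,\dots,j_r}$ with $j_i=1$ (resp. $2$), $j_\ell=0$ for $\ell\ne i$, zero elsewhere; $\delta_i,\chi_i$ are their classes in $\operatorname{Ext}^*_{A^e}(A,A)$. *)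

theory Defs
  imports Main
begin

text \<open>A = k[x_0..x_(r-1)]/(x_i^p), elements are coefficient functions
on exponent vectors (monomials).  A (x) A and A^e = A (x) A^op (= A (x) A, A commutative)
are coefficient functions on pairs of monomials.  Free modules with summands indexed
by multi-indices J (index tuples (j_0,..,j_(r-1))) are functions J -> summand.\<close>

type_synonym mono = "nat \<Rightarrow> nat"
type_synonym 'k alg = "mono \<Rightarrow> 'k"
type_synonym 'k alg2 = "mono \<times> mono \<Rightarrow> 'k"
type_synonym 'k cx = "mono \<Rightarrow> 'k alg2"       \<comment> \<open>element of (P_n (x) A) or of Q_n\<close>
type_synonym 'k pel = "mono \<Rightarrow> 'k alg"       \<comment> \<open>element of P_n\<close>

definition madd :: "mono \<Rightarrow> mono \<Rightarrow> mono" where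
  "madd a b = (\<lambda>i. a i + b i)"

definition zerom :: mono where "zerom = (\<lambda>_. 0)"

definition unitv :: "nat \<Rightarrow> mono" where "unitv i = (\<lambda>j. if j = i then 1 else 0)"

definition tmonos :: "nat \<Rightarrow> nat \<Rightarrow> mono set" where
  "tmonos r p = {e. \<forall>i. (i < r \<longrightarrow> e i < p) \<and> (r \<le> i \<longrightarrow> e i = 0)}"

text \<open>multi-indices J of total degree n (summands P_J of P_n, Q_J of Q_n)\<close>
definition idx :: "nat \<Rightarrow> nat \<Rightarrow> mono set" where
  "idx r n = {J. (\<forall>i. r \<le> i \<longrightarrow> J i = 0) \<and> (\<Sum>i<r. J i) = n}"

definition algA :: "nat \<Rightarrow> nat \<Rightarrow> ('k::zero) alg set" where
  "algA r p = {f. \<forall>e. e \<notin> tmonos r p \<longrightarrow> f e = 0}"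

definition alg2 :: "nat \<Rightarrow> nat \<Rightarrow> ('k::zero) alg2 set" where
  "alg2 r p = {u. \<forall>ab. ab \<notin> tmonos r p \<times> tmonos r p \<longrightarrow> u ab = 0}"

text \<open>carrier of P_n (x) A, and also of Q_n (both are direct sums of copies of A (x) A)\<close>
definition cx :: "nat \<Rightarrow> nat \<Rightarrow> nat \<Rightarrow> ('k::zero) cx set" where
  "cx r p n = {w. (\<forall>J. J \<notin> idx r n \<longrightarrow> w J = (\<lambda>_. 0)) \<and> (\<forall>J. w J \<in> alg2 r p)}"

text \<open>carrier of P_n\<close>
definition pel :: "nat \<Rightarrow> nat \<Rightarrow> nat \<Rightarrow> ('k::zero) pel set" where
  "pel r p n = {x. (\<forall>J. J \<notin> idx r n \<longrightarrow> x J = (\<lambda>_. 0)) \<and> (\<forall>J. x J \<in> algA r p)}"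

definition mon :: "mono \<Rightarrow> ('k::{zero,one}) alg" where
  "mon e = (\<lambda>e'. if e' = e then 1 else 0)"

definition mon2 :: "mono \<times> mono \<Rightarrow> ('k::{zero,one}) alg2" where
  "mon2 ab = (\<lambda>cd. if cd = ab then 1 else 0)"

definition mulA :: "nat \<Rightarrow> nat \<Rightarrow> ('k::comm_ring_1) alg \<Rightarrow> 'k alg \<Rightarrow> 'k alg" where
  "mulA r p f g = (\<lambda>e. if e \<in> tmonos r p then
     (\<Sum>a\<in>tmonos r p. \<Sum>b\<in>tmonos r p. if madd a b = e then f a * g b else 0) else 0)"

text \<open>multiplication in A (x) A (equivalently in A^e = A (x) A^op, as A is commutative)\<close>
definition mul2 :: "nat \<Rightarrow> nat \<Rightarrow> ('k::comm_ring_1) alg2 \<Rightarrow> 'k alg2 \<Rightarrow> 'k alg2" where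
  "mul2 r p u v = (\<lambda>(e1, e2). if e1 \<in> tmonos r p \<and> e2 \<in> tmonos r p then
     (\<Sum>ab\<in>tmonos r p \<times> tmonos r p. \<Sum>cd\<in>tmonos r p \<times> tmonos r p.
        if madd (fst ab) (fst cd) = e1 \<and> madd (snd ab) (snd cd) = e2 then u ab * v cd else 0)
     else 0)"

definition one2 :: "('k::{zero,one}) alg2" where "one2 = mon2 (zerom, zerom)"

definition pow2 :: "nat \<Rightarrow> nat \<Rightarrow> ('k::comm_ring_1) alg2 \<Rightarrow> nat \<Rightarrow> 'k alg2" where
  "pow2 r p u n = (mul2 r p u ^^ n) one2"

text \<open>Lie coproduct: Delta(x_i) = x_i (x) 1 + 1 (x) x_i, hence
  Delta(x^m) = sum_{a+b=m} prod_i binom(m_i,a_i) x^a (x) x^b (zero if m is not a monomial of A)\<close>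
definition DeltaLie :: "nat \<Rightarrow> nat \<Rightarrow> ('k::comm_ring_1) alg \<Rightarrow> 'k alg2" where
  "DeltaLie r p f = (\<lambda>(a, b). if madd a b \<in> tmonos r p
     then of_nat (\<Prod>i<r. (a i + b i) choose a i) * f (madd a b) else 0)"

text \<open>the algebra map A^e -> A (x) A,  alpha (x) beta |-> Delta(alpha) (1 (x) beta);
  the A^e-action on X (x) A is (alpha (x) beta)(x (x) a) = sum alpha_1 x (x) alpha_2 a beta,
  i.e. multiplication by the image of alpha (x) beta under this map\<close>
definition twist :: "nat \<Rightarrow> nat \<Rightarrow> ('k::comm_ring_1) alg2 \<Rightarrow> 'k alg2" where
  "twist r p \<alpha> = (\<lambda>ab. \<Sum>cd\<in>tmonos r p \<times> tmonos r p.
      \<alpha> cd * mul2 r p (DeltaLie r p (mon (fst cd))) (mon2 (zerom, snd cd)) ab)"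

definition actC :: "nat \<Rightarrow> nat \<Rightarrow> ('k::comm_ring_1) alg2 \<Rightarrow> 'k cx \<Rightarrow> 'k cx" where
  "actC r p \<alpha> w = (\<lambda>J. mul2 r p (twist r p \<alpha>) (w J))"

definition actQ :: "nat \<Rightarrow> nat \<Rightarrow> ('k::comm_ring_1) alg2 \<Rightarrow> 'k cx \<Rightarrow> 'k cx" where
  "actQ r p \<alpha> w = (\<lambda>J. mul2 r p \<alpha> (w J))"

definition actA :: "nat \<Rightarrow> nat \<Rightarrow> ('k::comm_ring_1) alg2 \<Rightarrow> 'k alg \<Rightarrow> 'k alg" where
  "actA r p \<alpha> a = (\<lambda>e. \<Sum>cd\<in>tmonos r p \<times> tmonos r p.
      \<alpha> cd * mulA r p (mon (fst cd)) (mulA r p a (mon (snd cd))) e)"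

definition addC :: "('k::plus) cx \<Rightarrow> 'k cx \<Rightarrow> 'k cx" where
  "addC w v = (\<lambda>J ab. w J ab + v J ab)"

text \<open>Koszul sign of the tensor product of complexes\<close>
definition ksign :: "mono \<Rightarrow> nat \<Rightarrow> 'k::comm_ring_1" where
  "ksign J i = (-1) ^ (\<Sum>j<i. J j)"

text \<open>differential of P_* (x) A, i.e. d_P (x) id_A: the factor P^(i) maps degree j+1 to
  degree j by x_i if j+1 is odd and by x_i^(p-1) if j+1 is even\<close>
definition coefP :: "nat \<Rightarrow> nat \<Rightarrow> nat \<Rightarrow> nat \<Rightarrow> ('k::comm_ring_1) alg2" where
  "coefP r p i j = (if even j then mon2 (unitv i, zerom)
                    else pow2 r p (mon2 (unitv i, zerom)) (p - 1))"

definition dP :: "nat \<Rightarrow> nat \<Rightarrow> ('k::comm_ring_1) cx \<Rightarrow> 'k cx" where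
  "dP r p w = (\<lambda>J ab. \<Sum>i<r. ksign J i * mul2 r p (coefP r p i (J i)) (w (madd J (unitv i))) ab)"

text \<open>differential of Q_*: by y_i - z_i, resp. (y_i - z_i)^(p-1)\<close>
definition yz :: "nat \<Rightarrow> ('k::comm_ring_1) alg2" where
  "yz i = (\<lambda>ab. mon2 (unitv i, zerom) ab - mon2 (zerom, unitv i) ab)"

definition coefQ :: "nat \<Rightarrow> nat \<Rightarrow> nat \<Rightarrow> nat \<Rightarrow> ('k::comm_ring_1) alg2" where
  "coefQ r p i j = (if even j then yz i else pow2 r p (yz i) (p - 1))"

definition dQ :: "nat \<Rightarrow> nat \<Rightarrow> ('k::comm_ring_1) cx \<Rightarrow> 'k cx" where
  "dQ r p w = (\<lambda>J ab. \<Sum>i<r. ksign J i * mul2 r p (coefQ r p i (J i)) (w (madd J (unitv i))) ab)"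

text \<open>augmentation of P_*(x)A: P_0 (x) A -> k (x) A = A, epsilon (x) id\<close>
definition epsP :: "('k::zero) cx \<Rightarrow> 'k alg" where
  "epsP w = (\<lambda>b. w zerom (zerom, b))"

definition mu :: "nat \<Rightarrow> nat \<Rightarrow> ('k::comm_ring_1) alg2 \<Rightarrow> 'k alg" where
  "mu r p u = (\<lambda>e. \<Sum>ab\<in>tmonos r p \<times> tmonos r p. u ab * mulA r p (mon (fst ab)) (mon (snd ab)) e)"

definition muQ :: "nat \<Rightarrow> nat \<Rightarrow> ('k::comm_ring_1) cx \<Rightarrow> 'k alg" where
  "muQ r p w = mu r p (w zerom)"

text \<open>A comparison map of A^e-resolutions Q_* -> P_* (x) A lifting id_A\<close>
definition comparison :: "nat \<Rightarrow> nat \<Rightarrow> (nat \<Rightarrow> ('k::comm_ring_1) cx \<Rightarrow> 'k cx) \<Rightarrow> bool" where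
  "comparison r p \<Psi> \<longleftrightarrow>
     (\<forall>n. \<forall>w\<in>cx r p n. \<Psi> n w \<in> cx r p n) \<and>
     (\<forall>n. \<forall>w\<in>cx r p n. \<forall>v\<in>cx r p n. \<Psi> n (addC w v) = addC (\<Psi> n w) (\<Psi> n v)) \<and>
     (\<forall>n. \<forall>\<alpha>\<in>alg2 r p. \<forall>w\<in>cx r p n. \<Psi> n (actQ r p \<alpha> w) = actC r p \<alpha> (\<Psi> n w)) \<and>
     (\<forall>n. \<forall>w\<in>cx r p (Suc n). dP r p (\<Psi> (Suc n) w) = \<Psi> n (dQ r p w)) \<and>
     (\<forall>w\<in>cx r p 0. epsP (\<Psi> 0 w) = muQ r p w)"

text \<open>The functor X |-> X (x) A on cochains: f : P_n -> k (A-linear) gives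
  f (x) id : P_n (x) A -> k (x) A = A\<close>
definition single :: "mono \<Rightarrow> ('k::zero) alg \<Rightarrow> 'k pel" where
  "single J x = (\<lambda>J'. if J' = J then x else (\<lambda>_. 0))"

definition tensorA :: "nat \<Rightarrow> nat \<Rightarrow> nat \<Rightarrow> (('k::comm_ring_1) pel \<Rightarrow> 'k) \<Rightarrow> 'k cx \<Rightarrow> 'k alg" where
  "tensorA r p n f w = (\<lambda>b. \<Sum>J\<in>idx r n. \<Sum>a\<in>tmonos r p. f (single J (mon a)) * w J (a, b))"

text \<open>the cochains eta^_i, zeta^_i : P_* -> k (augmentation on the summand P_{e_i}, resp. P_{2e_i})\<close>
definition eta_hat :: "nat \<Rightarrow> ('k::zero) pel \<Rightarrow> 'k" where
  "eta_hat i x = x (unitv i) zerom"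

definition zeta_hat :: "nat \<Rightarrow> ('k::zero) pel \<Rightarrow> 'k" where
  "zeta_hat i x = x (\<lambda>j. 2 * unitv i j) zerom"

text \<open>the cochains delta^_i, chi^_i : Q_* -> A (multiplication on Q_{e_i}, resp. Q_{2e_i})\<close>
definition delta_hat :: "nat \<Rightarrow> nat \<Rightarrow> nat \<Rightarrow> ('k::comm_ring_1) cx \<Rightarrow> 'k alg" where
  "delta_hat r p i w = mu r p (w (unitv i))"

definition chi_hat :: "nat \<Rightarrow> nat \<Rightarrow> nat \<Rightarrow> ('k::comm_ring_1) cx \<Rightarrow> 'k alg" where
  "chi_hat r p i w = mu r p (w (\<lambda>j. 2 * unitv i j))"

definition homQ :: "nat \<Rightarrow> nat \<Rightarrow> nat \<Rightarrow> (('k::comm_ring_1) cx \<Rightarrow> 'k alg) \<Rightarrow> bool" where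
  "homQ r p m h \<longleftrightarrow>
     (\<forall>w\<in>cx r p m. h w \<in> algA r p) \<and>
     (\<forall>w\<in>cx r p m. \<forall>v\<in>cx r p m. h (addC w v) = (\<lambda>e. h w e + h v e)) \<and>
     (\<forall>\<alpha>\<in>alg2 r p. \<forall>w\<in>cx r p m. h (actQ r p \<alpha> w) = actA r p \<alpha> (h w))"

text \<open>two n-cochains Q_n -> A define the same class in Ext^n_{A^e}(A,A) (n >= 1):
  they differ by a coboundary h o d\<close>
definition cohomologous :: "nat \<Rightarrow> nat \<Rightarrow> nat \<Rightarrow> (('k::comm_ring_1) cx \<Rightarrow> 'k alg) \<Rightarrow> ('k cx \<Rightarrow> 'k alg) \<Rightarrow> bool" where
  "cohomologous r p n f g \<longleftrightarrow>
     (\<exists>h. homQ r p (n - 1) h \<and> (\<forall>w\<in>cx r p n. f w = (\<lambda>e. g w e + h (dQ r p w) e)))"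

end

theory Submission
  imports Defs "HOL-Computational_Algebra.Primes"
begin

text \<open>In characteristic \<open>p\<close> the Lie coproduct \<open>\<Delta>(x\<^sub>i) = x\<^sub>i \<otimes> 1 + 1 \<otimes> x\<^sub>i\<close> is an
  algebra map on truncated polynomials: Pascal's rule gives multiplicativity, and the
  binomial coefficients that would produce \<open>x\<^sub>i\<^sup>p\<close> vanish mod \<open>p\<close>.  Hence
  \<open>\<alpha> \<otimes> \<beta> \<mapsto> \<Delta>(\<alpha>)(1 \<otimes> \<beta>)\<close> is an algebra map \<open>A\<^sup>e \<rightarrow> A \<otimes> A\<close>; it sends \<open>y\<^sub>i - z\<^sub>i\<close> to
  \<open>x\<^sub>i \<otimes> 1\<close>, so applying it summandwise is a comparison map \<open>Q\<^sub>* \<rightarrow> P\<^sub>* \<otimes> A\<close>.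

  Conversely, for any comparison map \<open>\<Psi>\<close> the coordinates read by \<open>\<eta>\<^sub>i \<otimes> A\<close> and
  \<open>\<zeta>\<^sub>i \<otimes> A\<close> (the component on \<open>P\<^bsub>e\<^sub>i\<^esub>\<close>, resp. \<open>P\<^bsub>2e\<^sub>i\<^esub>\<close>, at \<open>1 \<otimes> A\<close>) are forced by the
  chain-map equation, read at a coordinate of \<open>d\<^sub>P\<close> to which only that summand
  contributes, together with \<open>\<Psi>\<^sub>0\<close> lifting the multiplication.  They come out as \<open>\<mu>\<close>
  applied to the \<open>Q\<^bsub>e\<^sub>i\<^esub>\<close>, resp. \<open>Q\<^bsub>2e\<^sub>i\<^esub>\<close>, component, so the pulled-back cochains are
  \<open>\<delta>\<^sub>i\<close> and \<open>\<chi>\<^sub>i\<close> on the nose.\<close>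

section \<open>Exponent vectors\<close>

definition madd2 :: "mono \<times> mono \<Rightarrow> mono \<times> mono \<Rightarrow> mono \<times> mono" where
  "madd2 x y = (madd (fst x) (fst y), madd (snd x) (snd y))"

abbreviation T2 :: "nat \<Rightarrow> nat \<Rightarrow> (mono \<times> mono) set" where
  "T2 r p \<equiv> tmonos r p \<times> tmonos r p"

lemma finite_tmonos [simp]: "finite (tmonos r p)"
proof -
  have "tmonos r p = {f. \<forall>x. (x \<in> {..<r} \<longrightarrow> f x \<in> {..<p}) \<and> (x \<notin> {..<r} \<longrightarrow> f x = 0)}"
    by (auto simp: tmonos_def)
  then show ?thesis
    using finite_set_of_finite_funs[of "{..<r}" "{..<p}" 0] by simp
qed

lemma finite_idx [simp]: "finite (idx r n)"
proof -
  have "J x \<le> n" if "J \<in> idx r n" "x < r" for J x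
  proof -
    have "J x \<le> (\<Sum>i<r. J i)" using \<open>x < r\<close> by (intro member_le_sum) auto
    then show ?thesis using \<open>J \<in> idx r n\<close> by (simp add: idx_def)
  qed
  then have "idx r n \<subseteq> {f. \<forall>x. (x \<in> {..<r} \<longrightarrow> f x \<in> {..n}) \<and> (x \<notin> {..<r} \<longrightarrow> f x = 0)}"
    by (auto simp: idx_def)
  then show ?thesis
    using finite_subset finite_set_of_finite_funs[of "{..<r}" "{..n}" 0] by blast
qed

lemma madd_comm: "madd a b = madd b a"
  by (auto simp: madd_def)

lemma madd_assoc: "madd (madd a b) c = madd a (madd b c)"
  by (auto simp: madd_def)

lemma madd_zerom [simp]: "madd a zerom = a" "madd zerom a = a"
  by (auto simp: madd_def zerom_def)

lemma madd2_comm: "madd2 a b = madd2 b a"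
  by (auto simp: madd2_def madd_comm)

lemma madd2_assoc: "madd2 (madd2 a b) c = madd2 a (madd2 b c)"
  by (auto simp: madd2_def madd_assoc)

lemma madd_in_tmonosD1: "madd a b \<in> tmonos r p \<Longrightarrow> a \<in> tmonos r p"
  by (auto simp: tmonos_def madd_def)

lemma madd_in_tmonosD2: "madd a b \<in> tmonos r p \<Longrightarrow> b \<in> tmonos r p"
  using madd_in_tmonosD1 madd_comm by metis

lemma madd2_in_T2D1: "madd2 a b \<in> T2 r p \<Longrightarrow> a \<in> T2 r p"
  by (cases a; cases b) (auto simp: madd2_def dest: madd_in_tmonosD1)

lemma zerom_in_tmonos [simp]: "0 < p \<Longrightarrow> zerom \<in> tmonos r p"
  by (auto simp: tmonos_def zerom_def)

lemma unitv_in_tmonos [simp]: "i < r \<Longrightarrow> 1 < p \<Longrightarrow> unitv i \<in> tmonos r p"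
  by (auto simp: tmonos_def unitv_def)

lemma zerom_ne_unitv [simp]: "zerom \<noteq> unitv i" "unitv i \<noteq> zerom"
  by (auto simp: zerom_def unitv_def fun_eq_iff)

lemma madd_eq_zerom_iff: "madd x y = zerom \<longleftrightarrow> x = zerom \<and> y = zerom"
  by (auto simp: madd_def zerom_def fun_eq_iff)

lemma madd_eq_unitv_iff:
  "madd x y = unitv i \<longleftrightarrow> (x = unitv i \<and> y = zerom) \<or> (x = zerom \<and> y = unitv i)"
proof
  assume "madd x y = unitv i"
  then have xy: "\<And>j. x j + y j = (if j = i then 1 else 0)"
    by (auto simp: madd_def unitv_def fun_eq_iff)
  show "(x = unitv i \<and> y = zerom) \<or> (x = zerom \<and> y = unitv i)"
  proof (cases "x i = 1")
    case True
    have "x j = (if j = i then 1 else 0) \<and> y j = 0" for j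
      using xy[of j] True by (cases "j = i") auto
    then show ?thesis by (auto simp: unitv_def zerom_def fun_eq_iff)
  next
    case False
    have "y j = (if j = i then 1 else 0) \<and> x j = 0" for j
      using xy[of j] False by (cases "j = i") auto
    then show ?thesis by (auto simp: unitv_def zerom_def fun_eq_iff)
  qed
qed (auto simp: madd_def unitv_def zerom_def)

lemma madd_eq_iff: "madd a y = c \<longleftrightarrow> a \<le> c \<and> y = c - a"
proof
  assume "madd a y = c"
  then have "\<And>x. a x + y x = c x" by (auto simp: madd_def fun_eq_iff)
  then have "a x \<le> c x \<and> y x = c x - a x" for x by (metis add_diff_cancel_left' le_add1)
  then show "a \<le> c \<and> y = c - a" by (auto simp: le_fun_def fun_eq_iff)
next
  assume "a \<le> c \<and> y = c - a"
  then show "madd a y = c" by (auto simp: madd_def le_fun_def fun_eq_iff)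
qed

lemma eq_madd2_iff:
  "e = madd2 b y \<longleftrightarrow> fst b \<le> fst e \<and> snd b \<le> snd e \<and> y = (fst e - fst b, snd e - snd b)"
proof -
  have "e = madd2 b y \<longleftrightarrow> madd (fst b) (fst y) = fst e \<and> madd (snd b) (snd y) = snd e"
    by (cases e) (auto simp: madd2_def)
  then show ?thesis by (cases y) (auto simp: madd_eq_iff)
qed

lemma zerom_le [simp]: "zerom \<le> x"
  by (auto simp: zerom_def le_fun_def)

lemma unitv_le_iff: "unitv i \<le> x \<longleftrightarrow> 1 \<le> x i"
  by (auto simp: unitv_def le_fun_def)

lemma minus_zerom [simp]: "x - zerom = x"
  by (auto simp: zerom_def fun_eq_iff)

lemma madd_minus_cancel: "madd x y - y = x"
  by (simp add: madd_def fun_eq_iff)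

lemma madd_minus_unitv_left_eq_iff:
  "1 \<le> e1 i \<Longrightarrow> madd (e1 - unitv i) e2 = a \<longleftrightarrow> madd e1 e2 = madd a (unitv i)"
  by (auto simp: madd_def unitv_def fun_eq_iff)

lemma madd_minus_unitv_right_eq_iff:
  "1 \<le> e2 i \<Longrightarrow> madd e1 (e2 - unitv i) = a \<longleftrightarrow> madd e1 e2 = madd a (unitv i)"
  by (auto simp: madd_def unitv_def fun_eq_iff)

lemma sum_unitv: "i < r \<Longrightarrow> sum (unitv i) {..<r} = 1"
  by (simp add: unitv_def)

lemma idx_zero: "idx r 0 = {zerom}"
proof -
  have "J = zerom" if "J \<in> idx r 0" for J
  proof
    fix j show "J j = zerom j"
      using that by (cases "j < r") (auto simp: idx_def zerom_def)
  qed
  moreover have "zerom \<in> idx r 0" by (simp add: idx_def zerom_def)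
  ultimately show ?thesis by blast
qed

lemma unitv_in_idx_one: "i < r \<Longrightarrow> unitv i \<in> idx r (Suc 0)"
  by (simp add: idx_def unitv_def)

lemma idx_one: "idx r (Suc 0) = unitv ` {..<r}"
proof
  show "unitv ` {..<r} \<subseteq> idx r (Suc 0)" using unitv_in_idx_one by blast
next
  show "idx r (Suc 0) \<subseteq> unitv ` {..<r}"
  proof
    fix J assume J: "J \<in> idx r (Suc 0)"
    then have s: "(\<Sum>j<r. J j) = 1" and out: "\<forall>j. r \<le> j \<longrightarrow> J j = 0"
      by (auto simp: idx_def)
    then obtain i where i: "i < r" "J i \<noteq> 0"
      by (metis lessThan_iff sum.neutral zero_neq_one)
    have "(\<Sum>j<r. J j) = J i + (\<Sum>j\<in>{..<r}-{i}. J j)"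
      using i by (subst sum.remove[of _ i]) auto
    then have "J i = 1" and rest: "(\<Sum>j\<in>{..<r}-{i}. J j) = 0"
      using s i by linarith+
    have "J t = unitv i t" for t
      using \<open>J i = 1\<close> rest out by (cases "t < r"; cases "t = i") (auto simp: unitv_def)
    then have "J = unitv i" by blast
    then show "J \<in> unitv ` {..<r}" using i by blast
  qed
qed

lemma inj_on_unitv: "inj_on unitv {..<r}"
  by (auto simp: inj_on_def unitv_def fun_eq_iff)

lemma double_unitv: "(\<lambda>j. 2 * unitv i j) = madd (unitv i) (unitv i)"
  by (simp add: madd_def fun_eq_iff)

lemma double_unitv_in_idx_two: "i < r \<Longrightarrow> madd (unitv i) (unitv i) \<in> idx r (Suc (Suc 0))"
  by (simp add: idx_def madd_def unitv_def sum.distrib)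

section \<open>The algebra \<open>A \<otimes> A\<close>\<close>

text \<open>Unlike \<open>mon2\<close>, the basis vector \<open>tmon2 r p z\<close> is zero when \<open>z\<close> is not a
  monomial of \<open>A \<otimes> A\<close>, so it is the monomial \<open>z\<close> read as an element of \<open>A \<otimes> A\<close>.\<close>

definition tmon2 :: "nat \<Rightarrow> nat \<Rightarrow> mono \<times> mono \<Rightarrow> ('k::{zero,one}) alg2" where
  "tmon2 r p z = (\<lambda>e. if e = z \<and> z \<in> T2 r p then 1 else 0)"

lemma tmon2_out: "z \<notin> T2 r p \<Longrightarrow> tmon2 r p z = (\<lambda>_. 0)"
  by (auto simp: tmon2_def)

lemma mon2_eq_tmon2: "z \<in> T2 r p \<Longrightarrow> mon2 z = tmon2 r p z"
  by (auto simp: mon2_def tmon2_def fun_eq_iff)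

lemma one2_eq_tmon2: "0 < p \<Longrightarrow> one2 = tmon2 r p (zerom, zerom)"
  by (simp add: one2_def mon2_eq_tmon2)

lemma tmon2_in_alg2 [simp]: "tmon2 r p z \<in> alg2 r p"
  by (auto simp: alg2_def tmon2_def)

lemma zero_in_alg2 [simp]: "(\<lambda>_. 0) \<in> alg2 r p"
  by (simp add: alg2_def)

lemma one2_in_alg2 [simp]: "0 < p \<Longrightarrow> (one2 :: 'k::comm_ring_1 alg2) \<in> alg2 r p"
  by (simp add: one2_eq_tmon2[where r=r])

lemma mul2_in_alg2 [simp]: "mul2 r p u v \<in> alg2 r p"
  by (auto simp: alg2_def mul2_def)

lemma alg2_out: "u \<in> alg2 r p \<Longrightarrow> e \<notin> T2 r p \<Longrightarrow> u e = 0"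
  by (cases e) (auto simp: alg2_def)

lemma sum_tmon2_mult:
  "(\<Sum>z\<in>T2 r p. tmon2 r p a z * F z) = (if a \<in> T2 r p then F a else (0::'k::comm_ring_1))"
proof -
  have eq: "(\<lambda>z. tmon2 r p a z * F z) = (\<lambda>z. if z = a then (if a \<in> T2 r p then F a else 0) else 0)"
    by (auto simp: tmon2_def fun_eq_iff)
  show ?thesis unfolding eq by (simp add: sum.delta')
qed

lemma alg2_expand: "u \<in> alg2 r p \<Longrightarrow> u e = (\<Sum>z\<in>T2 r p. u z * (tmon2 r p z e :: 'k::comm_ring_1))"
proof -
  assume u: "u \<in> alg2 r p"
  have eq: "(\<lambda>z. u z * tmon2 r p z e) = (\<lambda>z. if z = e then (if e \<in> T2 r p then u e else 0) else 0)"
    by (auto simp: tmon2_def fun_eq_iff)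
  show ?thesis unfolding eq using u by (cases e) (auto simp: sum.delta' alg2_def)
qed

lemma tmon2_madd2_out: "a \<notin> T2 r p \<Longrightarrow> tmon2 r p (madd2 a b) e = 0"
  unfolding tmon2_def using madd2_in_T2D1[of a b r p] by auto

lemma sum_tmon2_collapse:
  "(\<Sum>z\<in>T2 r p. tmon2 r p a z * (tmon2 r p (madd2 z b) e :: 'k::comm_ring_1)) = tmon2 r p (madd2 a b) e"
  by (simp add: sum_tmon2_mult tmon2_madd2_out)

lemma sum_tmon2_shift:
  "(\<Sum>y\<in>T2 r p. F y * (tmon2 r p (madd2 b y) e :: 'k::comm_ring_1)) =
   (if e \<in> T2 r p \<and> fst b \<le> fst e \<and> snd b \<le> snd e then F (fst e - fst b, snd e - snd b) else 0)"
proof -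
  let ?y0 = "(fst e - fst b, snd e - snd b)"
  let ?c = "e \<in> T2 r p \<and> fst b \<le> fst e \<and> snd b \<le> snd e"
  have "F y * (tmon2 r p (madd2 b y) e :: 'k) = (if y = ?y0 then (if ?c then F ?y0 else 0) else 0)" for y
    using eq_madd2_iff[of e b y] by (auto simp: tmon2_def)
  then have "(\<Sum>y\<in>T2 r p. F y * (tmon2 r p (madd2 b y) e :: 'k)) =
      (if ?y0 \<in> T2 r p then (if ?c then F ?y0 else 0) else 0)"
    by simp
  moreover have "?y0 \<in> T2 r p" if ?c
  proof -
    have "madd (fst b) (fst e - fst b) = fst e" "madd (snd b) (snd e - snd b) = snd e"
      using that by (auto simp: madd_eq_iff)
    then show ?thesis
      using that madd_in_tmonosD2[of "fst b" "fst e - fst b" r p] madd_in_tmonosD2[of "snd b" "snd e - snd b" r p]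
      by (simp add: mem_Times_iff)
  qed
  ultimately show ?thesis by auto
qed

lemma mul2_expand:
  "mul2 r p u v e =
     (\<Sum>x\<in>T2 r p. \<Sum>y\<in>T2 r p. u x * v y * tmon2 r p (madd2 x y) e)"
  by (cases e) (auto simp: mul2_def tmon2_def madd2_def intro!: sum.cong sum.neutral)

lemma mul2_comm: "mul2 r p u v = mul2 r p v u"
  by (rule ext) (simp add: mul2_expand, subst sum.swap, simp add: madd2_comm ac_simps)

lemma sum_rotate3:
  "(\<Sum>x\<in>A. \<Sum>y\<in>B. \<Sum>s\<in>C. h x y s) = (\<Sum>s\<in>C. \<Sum>x\<in>A. \<Sum>y\<in>B. (h x y s :: 'a::comm_monoid_add))"
proof -
  have "(\<Sum>x\<in>A. \<Sum>y\<in>B. \<Sum>s\<in>C. h x y s) = (\<Sum>x\<in>A. \<Sum>s\<in>C. \<Sum>y\<in>B. h x y s)"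
    by (rule sum.cong[OF refl], rule sum.swap)
  also have "\<dots> = (\<Sum>s\<in>C. \<Sum>x\<in>A. \<Sum>y\<in>B. h x y s)"
    by (rule sum.swap)
  finally show ?thesis .
qed

lemma sum_rotate4:
  "(\<Sum>a\<in>A. \<Sum>b\<in>B. \<Sum>c\<in>C. \<Sum>d\<in>D. f a b c d) =
   (\<Sum>c\<in>C. \<Sum>d\<in>D. \<Sum>b\<in>B. \<Sum>a\<in>A. (f a b c d :: 'a::comm_monoid_add))"
proof -
  have "(\<Sum>a\<in>A. \<Sum>b\<in>B. \<Sum>c\<in>C. \<Sum>d\<in>D. f a b c d) = (\<Sum>a\<in>A. \<Sum>c\<in>C. \<Sum>b\<in>B. \<Sum>d\<in>D. f a b c d)"
    by (rule sum.cong[OF refl], rule sum.swap)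
  also have "\<dots> = (\<Sum>c\<in>C. \<Sum>a\<in>A. \<Sum>d\<in>D. \<Sum>b\<in>B. f a b c d)"
    by (subst sum.swap) (rule sum.cong[OF refl], rule sum.cong[OF refl], rule sum.swap)
  also have "\<dots> = (\<Sum>c\<in>C. \<Sum>d\<in>D. \<Sum>b\<in>B. \<Sum>a\<in>A. f a b c d)"
    by (rule sum.cong[OF refl], subst sum.swap, rule sum.cong[OF refl], rule sum.swap)
  finally show ?thesis .
qed

lemma sum2_delta:
  assumes "finite A" "finite B" "a0 \<in> A" "b0 \<in> B"
  shows "(\<Sum>x\<in>A. \<Sum>y\<in>B. if x = a0 \<and> y = b0 then g x y else (0::'k::comm_ring_1)) = g a0 b0"
proof -
  have "(\<Sum>y\<in>B. if x = a0 \<and> y = b0 then g x y else 0) = (if x = a0 then g x b0 else 0)" for x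
    using assms by (cases "x = a0") simp_all
  then show ?thesis using assms by simp
qed

lemma mul2_mul2_expand:
  "mul2 r p (mul2 r p u v) w e = (\<Sum>x\<in>T2 r p. \<Sum>y\<in>T2 r p. \<Sum>z\<in>T2 r p.
     u x * v y * w z * (tmon2 r p (madd2 (madd2 x y) z) e :: 'k::comm_ring_1))"
proof -
  let ?T = "T2 r p" and ?t = "tmon2 r p :: _ \<Rightarrow> 'k alg2"
  have "mul2 r p (mul2 r p u v) w e =
      (\<Sum>s\<in>?T. \<Sum>z\<in>?T. (\<Sum>x\<in>?T. \<Sum>y\<in>?T. u x * v y * ?t (madd2 x y) s) * w z * ?t (madd2 s z) e)"
    by (simp add: mul2_expand)
  also have "\<dots> =
      (\<Sum>s\<in>?T. \<Sum>z\<in>?T. \<Sum>x\<in>?T. \<Sum>y\<in>?T. u x * v y * w z * (?t (madd2 x y) s * ?t (madd2 s z) e))"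
    by (simp only: sum_distrib_right) (simp add: ac_simps)
  also have "\<dots> = (\<Sum>x\<in>?T. \<Sum>y\<in>?T. \<Sum>z\<in>?T. \<Sum>s\<in>?T. u x * v y * w z * (?t (madd2 x y) s * ?t (madd2 s z) e))"
    by (rule sum_rotate4)
  also have "\<dots> = (\<Sum>x\<in>?T. \<Sum>y\<in>?T. \<Sum>z\<in>?T. u x * v y * w z * ?t (madd2 (madd2 x y) z) e)"
    by (simp add: sum_tmon2_collapse flip: sum_distrib_left)
  finally show ?thesis .
qed

lemma mul2_assoc: "mul2 r p (mul2 r p u v) w = (mul2 r p u (mul2 r p v w) :: 'k::comm_ring_1 alg2)"
proof
  fix e
  have "mul2 r p u (mul2 r p v w) e = mul2 r p (mul2 r p v w) u e"
    by (simp add: mul2_comm)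
  also have "\<dots> = (\<Sum>x\<in>T2 r p. \<Sum>y\<in>T2 r p. \<Sum>z\<in>T2 r p.
      u z * v x * w y * (tmon2 r p (madd2 (madd2 z x) y) e :: 'k))"
  proof -
    have "madd2 (madd2 x y) z = madd2 (madd2 z x) y" for x y z
      by (metis madd2_assoc madd2_comm)
    then show ?thesis by (simp add: mul2_mul2_expand ac_simps)
  qed
  also have "\<dots> = mul2 r p (mul2 r p u v) w e"
    unfolding mul2_mul2_expand by (rule sum_rotate3)
  finally show "mul2 r p (mul2 r p u v) w e = mul2 r p u (mul2 r p v w) e" ..
qed

lemma mul2_left_comm: "mul2 r p a (mul2 r p b c) = (mul2 r p b (mul2 r p a c) :: 'k::comm_ring_1 alg2)"
  by (simp add: mul2_assoc[symmetric] mul2_comm[of r p a b])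

lemma mul2_interchange:
  "mul2 r p (mul2 r p a b) (mul2 r p c d) = (mul2 r p (mul2 r p a c) (mul2 r p b d) :: 'k::comm_ring_1 alg2)"
  by (simp add: mul2_assoc mul2_left_comm[of r p b c])

lemma mul2_tmon2_left:
  "mul2 r p (tmon2 r p a) u e = (\<Sum>y\<in>T2 r p. u y * (tmon2 r p (madd2 a y) e :: 'k::comm_ring_1))"
  by (simp add: mul2_expand mult.assoc sum_tmon2_mult tmon2_madd2_out flip: sum_distrib_left)

lemma mul2_tmon2_left_apply:
  "mul2 r p (tmon2 r p (a, zerom)) u (e1, e2) =
     (if (e1, e2) \<in> T2 r p \<and> a \<le> e1 then u (e1 - a, e2) else (0::'k::comm_ring_1))"
  by (simp add: mul2_tmon2_left sum_tmon2_shift)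

lemma mul2_tmon2_tmon2: "mul2 r p (tmon2 r p a) (tmon2 r p b) = (tmon2 r p (madd2 a b) :: 'k::comm_ring_1 alg2)"
proof
  fix e
  have "mul2 r p (tmon2 r p a) (tmon2 r p b) e = (\<Sum>y\<in>T2 r p. tmon2 r p b y * (tmon2 r p (madd2 y a) e :: 'k))"
    by (simp add: mul2_tmon2_left madd2_comm[of a])
  also have "\<dots> = tmon2 r p (madd2 a b) e"
    by (simp add: sum_tmon2_collapse madd2_comm[of b])
  finally show "mul2 r p (tmon2 r p a) (tmon2 r p b) e = (tmon2 r p (madd2 a b) e :: 'k)" .
qed

lemma mul2_one_left: "0 < p \<Longrightarrow> u \<in> alg2 r p \<Longrightarrow> mul2 r p (tmon2 r p (zerom, zerom)) u = (u :: 'k::comm_ring_1 alg2)"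
proof
  fix e
  assume "0 < p" "u \<in> alg2 r p"
  then show "mul2 r p (tmon2 r p (zerom, zerom)) u e = u e"
    using alg2_expand[of u r p e] by (simp add: mul2_tmon2_left madd2_def)
qed

lemma mul2_zero_right [simp]: "mul2 r p u (\<lambda>_. 0) = (\<lambda>_. 0 :: 'k::comm_ring_1)"
  by (rule ext) (simp add: mul2_expand)

lemma mul2_zero_left [simp]: "mul2 r p (\<lambda>_. 0) u = (\<lambda>_. 0 :: 'k::comm_ring_1)"
  by (rule ext) (simp add: mul2_expand)

lemma mul2_sum_left:
  "mul2 r p (\<lambda>e. \<Sum>s\<in>S. c s * f s e) g e0 = (\<Sum>s\<in>S. (c s :: 'k::comm_ring_1) * mul2 r p (f s) g e0)"
proof -
  have "mul2 r p (\<lambda>e. \<Sum>s\<in>S. c s * f s e) g e0 =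
      (\<Sum>x\<in>T2 r p. \<Sum>y\<in>T2 r p. \<Sum>s\<in>S. c s * (f s x * g y * tmon2 r p (madd2 x y) e0))"
    by (simp add: mul2_expand sum_distrib_left sum_distrib_right ac_simps)
  also have "\<dots> = (\<Sum>s\<in>S. \<Sum>x\<in>T2 r p. \<Sum>y\<in>T2 r p. c s * (f s x * g y * tmon2 r p (madd2 x y) e0))"
    by (rule sum_rotate3)
  also have "\<dots> = (\<Sum>s\<in>S. c s * mul2 r p (f s) g e0)"
    by (simp add: mul2_expand sum_distrib_left)
  finally show ?thesis .
qed

lemma mul2_sum_right:
  "mul2 r p g (\<lambda>e. \<Sum>s\<in>S. c s * f s e) e0 = (\<Sum>s\<in>S. (c s :: 'k::comm_ring_1) * mul2 r p g (f s) e0)"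
  by (simp add: mul2_comm[of r p g] mul2_sum_left)

lemma mul2_add_left:
  "mul2 r p (\<lambda>e. f e + g e) h = (\<lambda>e. mul2 r p f h e + (mul2 r p g h e :: 'k::comm_ring_1))"
  by (rule ext) (simp add: mul2_expand sum.distrib distrib_right)

lemma mul2_apply_expand:
  assumes "v \<in> alg2 r p" and "e \<in> T2 r p"
  shows "mul2 r p u v e = (\<Sum>y\<in>T2 r p. v y *
    (if fst y \<le> fst e \<and> snd y \<le> snd e then u (fst e - fst y, snd e - snd y) else (0::'k::comm_ring_1)))"
proof -
  have v: "v = (\<lambda>e. \<Sum>z\<in>T2 r p. v z * tmon2 r p z e)"
    using alg2_expand[OF assms(1)] by blast
  have "mul2 r p u v e = mul2 r p v u e"
    by (simp add: mul2_comm)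
  also have "\<dots> = mul2 r p (\<lambda>e. \<Sum>z\<in>T2 r p. v z * tmon2 r p z e) u e"
    by (subst v) (rule refl)
  also have "\<dots> = (\<Sum>y\<in>T2 r p. v y *
      (if fst y \<le> fst e \<and> snd y \<le> snd e then u (fst e - fst y, snd e - snd y) else 0))"
    using assms(2) by (simp add: mul2_sum_left mul2_tmon2_left sum_tmon2_shift)
  finally show ?thesis .
qed

lemma pow2_tmon2:
  "0 < p \<Longrightarrow> pow2 r p (tmon2 r p (a, zerom)) n = (tmon2 r p ((\<lambda>t. n * a t), zerom) :: 'k::comm_ring_1 alg2)"
proof (induction n)
  case 0
  then show ?case by (simp add: pow2_def one2_eq_tmon2[where r=r] zerom_def)
next
  case (Suc n)
  have "pow2 r p (tmon2 r p (a, zerom)) (Suc n) =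
      mul2 r p (tmon2 r p (a, zerom)) (pow2 r p (tmon2 r p (a, zerom)) n :: 'k alg2)"
    by (simp add: pow2_def)
  also have "\<dots> = tmon2 r p (madd2 (a, zerom) ((\<lambda>t. n * a t), zerom))"
    using Suc by (simp add: mul2_tmon2_tmon2)
  also have "madd2 (a, zerom) ((\<lambda>t. n * a t), zerom) = ((\<lambda>t. Suc n * a t), zerom)"
    by (simp add: madd2_def madd_def zerom_def)
  finally show ?case .
qed

section \<open>The Lie coproduct is multiplicative\<close>

definition binom_mono :: "nat \<Rightarrow> mono \<Rightarrow> mono \<Rightarrow> nat" where
  "binom_mono r u v = (\<Prod>j<r. (u j + v j) choose u j)"

lemma binom_mono_split:
  "i < r \<Longrightarrow> binom_mono r u v = ((u i + v i) choose u i) * (\<Prod>j\<in>{..<r}-{i}. (u j + v j) choose u j)"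
  unfolding binom_mono_def by (subst prod.remove[of _ i]) auto

lemma binom_mono_zerom [simp]:
  "binom_mono r zerom v = 1" "binom_mono r (unitv i) zerom = 1" "binom_mono r zerom (unitv i) = 1"
  by (auto simp: binom_mono_def zerom_def unitv_def)

lemma binom_mono_pascal:
  assumes i: "i < r" and pos: "1 \<le> u i + v i"
  shows "(if 1 \<le> u i then binom_mono r (u - unitv i) v else 0) +
         (if 1 \<le> v i then binom_mono r u (v - unitv i) else 0) = binom_mono r u v"
proof -
  let ?R = "\<Prod>j\<in>{..<r}-{i}. (u j + v j) choose u j"
  have "(\<Prod>j\<in>{..<r}-{i}. ((u - unitv i) j + v j) choose (u - unitv i) j) = ?R"
    "(\<Prod>j\<in>{..<r}-{i}. (u j + (v - unitv i) j) choose u j) = ?R"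
    by (auto simp: unitv_def intro!: prod.cong)
  then have left: "binom_mono r (u - unitv i) v = ((u i - 1 + v i) choose (u i - 1)) * ?R"
    and right: "binom_mono r u (v - unitv i) = ((u i + (v i - 1)) choose u i) * ?R"
    using binom_mono_split[OF i, of "u - unitv i" v] binom_mono_split[OF i, of u "v - unitv i"]
    by (simp_all add: unitv_def)
  have "(if 1 \<le> u i then (u i - 1 + v i) choose (u i - 1) else 0) +
        (if 1 \<le> v i then (u i + (v i - 1)) choose u i else 0) = (u i + v i) choose u i"
  proof (cases "u i")
    case 0
    then show ?thesis using pos by simp
  next
    case (Suc k)
    then show ?thesis
      by (cases "v i") simp_all
  qed
  then show ?thesis
    using binom_mono_split[OF i, of u v] left right
    by (cases "1 \<le> u i"; cases "1 \<le> v i") (simp_all add: add_mult_distrib[symmetric])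
qed

lemma prime_dvd_binom_mono:
  assumes "prime p" "i < r" "e1 \<in> tmonos r p" "e2 \<in> tmonos r p" "e1 i + e2 i = p"
  shows "p dvd binom_mono r e1 e2"
proof -
  have "0 < e1 i" "e1 i < p"
    using assms by (auto simp: tmonos_def)
  then have "p dvd ((e1 i + e2 i) choose e1 i)"
    using dvd_choose_prime[of "e1 i" p] assms(1,5) by simp
  then show ?thesis
    using binom_mono_split[OF assms(2)] by simp
qed

lemma madd_unitv_in_tmonos:
  "a \<in> tmonos r p \<Longrightarrow> i < r \<Longrightarrow> a i + 1 < p \<Longrightarrow> madd a (unitv i) \<in> tmonos r p"
  by (auto simp: tmonos_def madd_def unitv_def)

abbreviation Dmon :: "nat \<Rightarrow> nat \<Rightarrow> mono \<Rightarrow> ('k::comm_ring_1) alg2" where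
  "Dmon r p a \<equiv> DeltaLie r p (mon a)"

lemma Dmon_apply:
  "Dmon r p a (x, y) = (if madd x y = a \<and> a \<in> tmonos r p then of_nat (binom_mono r x y) else 0)"
  by (auto simp: DeltaLie_def mon_def binom_mono_def madd_def)

lemma Dmon_in_alg2 [simp]: "Dmon r p a \<in> alg2 r p"
  unfolding alg2_def by (auto simp: Dmon_apply dest: madd_in_tmonosD1 madd_in_tmonosD2)

lemma Dmon_out: "a \<notin> tmonos r p \<Longrightarrow> Dmon r p a = (\<lambda>_. 0)"
  by (rule ext, rename_tac z, case_tac z) (auto simp: Dmon_apply)

lemma Dmon_zerom: "0 < p \<Longrightarrow> Dmon r p zerom = tmon2 r p (zerom, zerom)"
  by (rule ext, rename_tac z, case_tac z) (auto simp: Dmon_apply madd_eq_zerom_iff tmon2_def)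

lemma Dmon_unitv:
  "i < r \<Longrightarrow> 1 < p \<Longrightarrow>
   Dmon r p (unitv i) = (\<lambda>e. tmon2 r p (unitv i, zerom) e + tmon2 r p (zerom, unitv i) e :: 'k::comm_ring_1)"
  by (rule ext, rename_tac z, case_tac z) (auto simp: Dmon_apply madd_eq_unitv_iff tmon2_def)

lemma mul2_Dmon_Dmon_unitv_apply:
  assumes "i < r" "1 < p"
  shows "mul2 r p (Dmon r p a) (Dmon r p (unitv i)) (e1, e2) =
    (if (e1, e2) \<in> T2 r p \<and> 1 \<le> e1 i then (Dmon r p a (e1 - unitv i, e2) :: 'k::comm_ring_1) else 0) +
    (if (e1, e2) \<in> T2 r p \<and> 1 \<le> e2 i then Dmon r p a (e1, e2 - unitv i) else 0)"
  using assms
  by (subst mul2_comm) (simp add: Dmon_unitv mul2_add_left mul2_tmon2_left sum_tmon2_shift unitv_le_iff)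

lemma mul2_Dmon_Dmon_unitv_eq_binom:
  assumes i: "i < r" "1 < p" and e: "(e1, e2) \<in> T2 r p"
    and s: "madd e1 e2 = madd a (unitv i)" and a: "a \<in> tmonos r p"
  shows "mul2 r p (Dmon r p a) (Dmon r p (unitv i)) (e1, e2) = (of_nat (binom_mono r e1 e2) :: 'k::comm_ring_1)"
proof -
  have si: "e1 i + e2 i = a i + 1"
    using fun_cong[OF s, of i] by (simp add: madd_def unitv_def)
  have "mul2 r p (Dmon r p a) (Dmon r p (unitv i)) (e1, e2) =
      (of_nat ((if 1 \<le> e1 i then binom_mono r (e1 - unitv i) e2 else 0) +
               (if 1 \<le> e2 i then binom_mono r e1 (e2 - unitv i) else 0)) :: 'k)"
    using e s a
    by (cases "1 \<le> e1 i"; cases "1 \<le> e2 i")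
      (simp_all add: mul2_Dmon_Dmon_unitv_apply[OF i] Dmon_apply
        madd_minus_unitv_left_eq_iff madd_minus_unitv_right_eq_iff)
  also have "\<dots> = of_nat (binom_mono r e1 e2)"
    using binom_mono_pascal[OF i(1), of e1 e2] si by simp
  finally show ?thesis .
qed

text \<open>When the exponent of \<open>x\<^sub>i\<close> reaches \<open>p\<close>, the binomial coefficient given by
  Pascal's rule vanishes in characteristic \<open>p\<close>, matching \<open>x\<^sub>i\<^sup>p = 0\<close>.\<close>

lemma Dmon_madd_unitv:
  assumes i: "i < r" and p: "prime p" "p = CHAR('k::comm_ring_1)"
  shows "Dmon r p (madd a (unitv i)) = (mul2 r p (Dmon r p a) (Dmon r p (unitv i)) :: 'k alg2)"
proof (rule ext)
  fix e :: "mono \<times> mono"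
  obtain e1 e2 where e: "e = (e1, e2)" by (cases e)
  let ?T = "tmonos r p" and ?rhs = "mul2 r p (Dmon r p a) (Dmon r p (unitv i)) e :: 'k"
  have p1: "1 < p" using p prime_gt_1_nat by blast
  show "Dmon r p (madd a (unitv i)) e = ?rhs"
  proof (cases "e \<in> T2 r p \<and> madd e1 e2 = madd a (unitv i) \<and> a \<in> ?T")
    case False
    then have "?rhs = 0"
      using madd_in_tmonosD1
      by (auto simp: e mul2_Dmon_Dmon_unitv_apply[OF i p1] Dmon_apply
          madd_minus_unitv_left_eq_iff madd_minus_unitv_right_eq_iff)
    moreover have "Dmon r p (madd a (unitv i)) e = 0"
    proof (cases "e \<in> T2 r p")
      case True
      then show ?thesis using False madd_in_tmonosD1 by (auto simp: e Dmon_apply)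
    qed (simp add: alg2_out[OF Dmon_in_alg2])
    ultimately show ?thesis by simp
  next
    case True
    then have eT: "(e1, e2) \<in> T2 r p" and s: "madd e1 e2 = madd a (unitv i)" and a: "a \<in> ?T"
      by (auto simp: e)
    have R: "?rhs = of_nat (binom_mono r e1 e2)"
      unfolding e by (rule mul2_Dmon_Dmon_unitv_eq_binom[OF i p1 eT s a])
    show ?thesis
    proof (cases "madd a (unitv i) \<in> ?T")
      case True
      then show ?thesis using R s by (simp add: e Dmon_apply)
    next
      case False
      have "a i < p" using a i by (auto simp: tmonos_def)
      moreover have "e1 i + e2 i = a i + 1"
        using fun_cong[OF s, of i] by (simp add: madd_def unitv_def)
      ultimately have "e1 i + e2 i = p"
        using madd_unitv_in_tmonos[OF a i] False by linarith
      then have "(of_nat (binom_mono r e1 e2) :: 'k) = 0"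
        using prime_dvd_binom_mono[OF p(1) i] eT p(2) by (simp add: of_nat_eq_0_iff_char_dvd)
      then show ?thesis using R False by (simp add: e Dmon_apply)
    qed
  qed
qed

lemma tmonos_degree_Suc_split:
  assumes "c \<in> tmonos r p" "sum c {..<r} = Suc n"
  obtains i c' where "i < r" "c = madd c' (unitv i)" "c' \<in> tmonos r p" "sum c' {..<r} = n"
proof -
  have "sum c {..<r} \<noteq> 0" using assms(2) by simp
  then obtain i where i: "i < r" "c i \<noteq> 0" by (meson lessThan_iff sum.neutral)
  define c' where "c' = c - unitv i"
  have c: "c = madd c' (unitv i)"
    using i by (auto simp: c'_def madd_def unitv_def fun_eq_iff)
  have c'T: "c' \<in> tmonos r p"
    using assms(1) madd_in_tmonosD1 by (simp add: c)
  have "sum c {..<r} = sum c' {..<r} + sum (unitv i) {..<r}"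
    by (subst c) (simp add: madd_def sum.distrib)
  then have "sum c' {..<r} = n"
    using assms(2) sum_unitv[OF i(1)] by simp
  then show ?thesis using that i(1) c c'T by blast
qed

lemma Dmon_madd:
  assumes p: "prime p" "p = CHAR('k::comm_ring_1)"
  shows "Dmon r p (madd a c) = (mul2 r p (Dmon r p a) (Dmon r p c) :: 'k alg2)"
proof (cases "c \<in> tmonos r p")
  case True
  have "c \<in> tmonos r p \<Longrightarrow> sum c {..<r} = n \<Longrightarrow>
      Dmon r p (madd a c) = (mul2 r p (Dmon r p a) (Dmon r p c) :: 'k alg2)" for n
  proof (induction n arbitrary: c a)
    case 0
    then have "c = zerom"
      by (auto simp: zerom_def tmonos_def fun_eq_iff)
    moreover have "0 < p" using p(1) prime_gt_0_nat by blast
    ultimately show ?case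
      by (simp add: Dmon_zerom mul2_comm[of r p "Dmon r p a"] mul2_one_left)
  next
    case (Suc n)
    then obtain i c' where i: "i < r" and c: "c = madd c' (unitv i)"
      and c': "c' \<in> tmonos r p" "sum c' {..<r} = n"
      by (blast elim: tmonos_degree_Suc_split)
    have "Dmon r p (madd a c) = (Dmon r p (madd (madd a c') (unitv i)) :: 'k alg2)"
      by (simp add: c madd_assoc)
    also have "\<dots> = mul2 r p (mul2 r p (Dmon r p a) (Dmon r p c')) (Dmon r p (unitv i))"
      using Suc.IH[OF c'] Dmon_madd_unitv[OF i p] by simp
    also have "\<dots> = mul2 r p (Dmon r p a) (Dmon r p c)"
      using Dmon_madd_unitv[OF i p, of c'] by (simp add: c mul2_assoc)
    finally show ?case .
  qed
  then show ?thesis using True by blast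
next
  case False
  then have "madd a c \<notin> tmonos r p"
    using madd_in_tmonosD2 by blast
  with False show ?thesis
    by (simp add: Dmon_out)
qed

section \<open>The twisting homomorphism \<open>A\<^sup>e \<rightarrow> A \<otimes> A\<close>\<close>

definition twist_mon :: "nat \<Rightarrow> nat \<Rightarrow> mono \<times> mono \<Rightarrow> ('k::comm_ring_1) alg2" where
  "twist_mon r p z = mul2 r p (Dmon r p (fst z)) (tmon2 r p (zerom, snd z))"

lemma twist_eq_sum: "0 < p \<Longrightarrow> twist r p \<alpha> = (\<lambda>e. \<Sum>z\<in>T2 r p. \<alpha> z * twist_mon r p z e)"
  unfolding twist_def twist_mon_def
  by (rule ext, rule sum.cong) (auto simp: mon2_eq_tmon2[where r=r and p=p])

lemma twist_mon_out: "z \<notin> T2 r p \<Longrightarrow> twist_mon r p z = (\<lambda>_. 0 :: 'k::comm_ring_1)"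
  by (cases z) (auto simp: twist_mon_def Dmon_out tmon2_out)

lemma if_in_T2_twist_mon: "(if z \<in> T2 r p then twist_mon r p z e else 0) = (twist_mon r p z e :: 'k::comm_ring_1)"
  by (simp add: twist_mon_out)

lemma twist_mon_madd2:
  assumes "prime p" "p = CHAR('k::comm_ring_1)"
  shows "twist_mon r p (madd2 x y) = (mul2 r p (twist_mon r p x) (twist_mon r p y) :: 'k alg2)"
proof -
  have "tmon2 r p (zerom, madd (snd x) (snd y)) =
      (mul2 r p (tmon2 r p (zerom, snd x)) (tmon2 r p (zerom, snd y)) :: 'k alg2)"
    by (simp add: mul2_tmon2_tmon2 madd2_def)
  then show ?thesis
    unfolding twist_mon_def madd2_def fst_conv snd_conv Dmon_madd[OF assms]
    by (simp add: mul2_interchange)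
qed

lemma twist_mul2:
  assumes p: "prime p" "p = CHAR('k::comm_ring_1)"
  shows "twist r p (mul2 r p \<alpha> \<beta>) = (mul2 r p (twist r p \<alpha>) (twist r p \<beta>) :: 'k alg2)"
proof
  fix e
  have p0: "0 < p" using p prime_gt_0_nat by blast
  let ?T = "T2 r p"
  have "twist r p (mul2 r p \<alpha> \<beta>) e =
      (\<Sum>z\<in>?T. (\<Sum>x\<in>?T. \<Sum>y\<in>?T. \<alpha> x * \<beta> y * tmon2 r p (madd2 x y) z) * twist_mon r p z e)"
    by (simp add: twist_eq_sum[OF p0] mul2_expand)
  also have "\<dots> = (\<Sum>z\<in>?T. \<Sum>x\<in>?T. \<Sum>y\<in>?T. \<alpha> x * \<beta> y * (tmon2 r p (madd2 x y) z * twist_mon r p z e))"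
    by (simp add: sum_distrib_right mult.assoc)
  also have "\<dots> = (\<Sum>x\<in>?T. \<Sum>y\<in>?T. \<Sum>z\<in>?T. \<alpha> x * \<beta> y * (tmon2 r p (madd2 x y) z * twist_mon r p z e))"
    by (rule sum_rotate3[symmetric])
  also have "\<dots> = (\<Sum>x\<in>?T. \<Sum>y\<in>?T. \<alpha> x * \<beta> y * twist_mon r p (madd2 x y) e)"
    by (simp add: sum_tmon2_mult if_in_T2_twist_mon flip: sum_distrib_left)
  also have "\<dots> = (\<Sum>x\<in>?T. \<Sum>y\<in>?T. \<alpha> x * \<beta> y * mul2 r p (twist_mon r p x) (twist_mon r p y) e)"
    by (simp add: twist_mon_madd2[OF p])
  also have "\<dots> = mul2 r p (twist r p \<alpha>) (twist r p \<beta>) e"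
    by (simp add: twist_eq_sum[OF p0] mul2_sum_left mul2_sum_right sum_distrib_left mult.assoc)
  finally show "twist r p (mul2 r p \<alpha> \<beta>) e = mul2 r p (twist r p \<alpha>) (twist r p \<beta>) e" .
qed

lemma twist_in_alg2 [simp]: "twist r p (\<alpha> :: 'k::comm_ring_1 alg2) \<in> alg2 r p"
  unfolding alg2_def twist_def
proof (intro CollectI allI impI)
  fix ab assume "ab \<notin> T2 r p"
  then have "\<And>cd. mul2 r p (Dmon r p (fst cd)) (mon2 (zerom, snd cd)) ab = (0::'k)"
    by (cases ab) (auto simp: mul2_def)
  then show "(\<Sum>cd\<in>T2 r p. \<alpha> cd * mul2 r p (Dmon r p (fst cd)) (mon2 (zerom, snd cd)) ab) = 0"
    by simp
qed

lemma twist_zero [simp]: "twist r p (\<lambda>_. 0) = (\<lambda>_. 0 :: 'k::comm_ring_1)"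
  by (rule ext) (simp add: twist_def)

lemma twist_sum:
  "0 < p \<Longrightarrow> twist r p (\<lambda>ab. \<Sum>s\<in>S. c s * f s ab) = (\<lambda>e. \<Sum>s\<in>S. (c s :: 'k::comm_ring_1) * twist r p (f s) e)"
proof
  fix e assume p0: "0 < p"
  have "twist r p (\<lambda>ab. \<Sum>s\<in>S. c s * f s ab) e = (\<Sum>z\<in>T2 r p. \<Sum>s\<in>S. c s * (f s z * twist_mon r p z e))"
    by (simp add: twist_eq_sum[OF p0] sum_distrib_right mult.assoc)
  also have "\<dots> = (\<Sum>s\<in>S. \<Sum>z\<in>T2 r p. c s * (f s z * twist_mon r p z e))"
    by (rule sum.swap)
  also have "\<dots> = (\<Sum>s\<in>S. c s * twist r p (f s) e)"
    by (simp add: twist_eq_sum[OF p0] sum_distrib_left)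
  finally show "twist r p (\<lambda>ab. \<Sum>s\<in>S. c s * f s ab) e = (\<Sum>s\<in>S. c s * twist r p (f s) e)" .
qed

lemma twist_add:
  "0 < p \<Longrightarrow> twist r p (\<lambda>ab. u ab + v ab) = (\<lambda>e. twist r p u e + (twist r p v e :: 'k::comm_ring_1))"
  by (rule ext) (simp add: twist_eq_sum distrib_right sum.distrib)

lemma twist_diff:
  "0 < p \<Longrightarrow> twist r p (\<lambda>ab. u ab - v ab) = (\<lambda>e. twist r p u e - (twist r p v e :: 'k::comm_ring_1))"
  by (rule ext) (simp add: twist_eq_sum left_diff_distrib sum_subtractf)

lemma twist_tmon2: "0 < p \<Longrightarrow> twist r p (tmon2 r p z) = (twist_mon r p z :: 'k::comm_ring_1 alg2)"
  by (rule ext) (simp add: twist_eq_sum sum_tmon2_mult if_in_T2_twist_mon)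

lemma twist_mon_left: "0 < p \<Longrightarrow> twist_mon r p (a, zerom) = (Dmon r p a :: 'k::comm_ring_1 alg2)"
  unfolding twist_mon_def by (simp add: mul2_comm[of r p "Dmon r p a"] mul2_one_left)

lemma twist_mon_right: "0 < p \<Longrightarrow> twist_mon r p (zerom, d) = (tmon2 r p (zerom, d) :: 'k::comm_ring_1 alg2)"
  unfolding twist_mon_def by (simp add: Dmon_zerom mul2_tmon2_tmon2 madd2_def)

lemma twist_one2: "0 < p \<Longrightarrow> twist r p one2 = (one2 :: 'k::comm_ring_1 alg2)"
  by (simp add: one2_eq_tmon2[where r=r] twist_tmon2 twist_mon_left Dmon_zerom)

text \<open>The point of the twist: it carries the differentials of \<open>Q\<^sub>*\<close>, built from
  \<open>y\<^sub>i - z\<^sub>i\<close>, to those of \<open>P\<^sub>* \<otimes> A\<close>, built from \<open>x\<^sub>i \<otimes> 1\<close>.\<close>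

lemma twist_yz: "i < r \<Longrightarrow> 1 < p \<Longrightarrow> twist r p (yz i) = (tmon2 r p (unitv i, zerom) :: 'k::comm_ring_1 alg2)"
proof -
  assume i: "i < r" and p1: "1 < p"
  then have "yz i = (\<lambda>ab. tmon2 r p (unitv i, zerom) ab - (tmon2 r p (zerom, unitv i) ab :: 'k))"
    by (simp add: yz_def mon2_eq_tmon2[where r=r and p=p])
  with p1 show ?thesis
    by (simp add: twist_diff twist_tmon2 twist_mon_left twist_mon_right Dmon_unitv[OF i p1])
qed

lemma twist_pow2:
  assumes "prime p" "p = CHAR('k::comm_ring_1)"
  shows "twist r p (pow2 r p u n) = (pow2 r p (twist r p u) n :: 'k alg2)"
proof (induction n)
  case 0
  then show ?case using assms prime_gt_0_nat by (simp add: pow2_def twist_one2)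
next
  case (Suc n)
  have "pow2 r p u (Suc n) = mul2 r p u (pow2 r p u n)" for u :: "'k alg2"
    by (simp add: pow2_def)
  then show ?case by (simp add: twist_mul2[OF assms] Suc.IH)
qed

lemma twist_coefQ:
  assumes "prime p" "p = CHAR('k::comm_ring_1)" "i < r"
  shows "twist r p (coefQ r p i j) = (coefP r p i j :: 'k alg2)"
proof -
  have p1: "1 < p" using assms prime_gt_1_nat by blast
  then have "mon2 (unitv i, zerom) = (tmon2 r p (unitv i, zerom) :: 'k alg2)"
    using assms(3) by (simp add: mon2_eq_tmon2)
  then show ?thesis
    by (simp add: coefQ_def coefP_def twist_pow2[OF assms(1,2)] twist_yz[OF assms(3) p1])
qed

lemma dP_twist:
  assumes "prime p" "p = CHAR('k::comm_ring_1)"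
  shows "dP r p (\<lambda>J. twist r p (w J)) = (\<lambda>J. twist r p (dQ r p w J) :: 'k alg2)"
proof (intro ext)
  fix J e
  have "0 < p" using assms prime_gt_0_nat by blast
  then have "twist r p (dQ r p w J) e =
      (\<Sum>i<r. ksign J i * twist r p (mul2 r p (coefQ r p i (J i)) (w (madd J (unitv i)))) e)"
    unfolding dQ_def by (simp add: twist_sum)
  also have "\<dots> = dP r p (\<lambda>J. twist r p (w J)) J e"
    unfolding dP_def by (rule sum.cong) (simp_all add: twist_mul2[OF assms] twist_coefQ[OF assms])
  finally show "dP r p (\<lambda>J. twist r p (w J)) J e = (twist r p (dQ r p w J) e :: 'k)" by simp
qed

lemma mulA_mon_mon:
  assumes "a \<in> tmonos r p" "b \<in> tmonos r p"
  shows "mulA r p (mon a) (mon b) e = (if e \<in> tmonos r p \<and> madd a b = e then 1 else (0::'k::comm_ring_1))"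
proof -
  have inner: "(\<Sum>b'\<in>tmonos r p. if madd a' b' = e then mon a a' * mon b b' else 0) =
      (if a' = a \<and> madd a b = e then 1 else (0::'k))" for a'
  proof -
    have eq: "(\<lambda>b'. if madd a' b' = e then mon a a' * mon b b' else (0::'k)) =
        (\<lambda>b'. if b' = b then (if a' = a \<and> madd a b = e then 1 else 0) else 0)"
      by (rule ext) (auto simp: mon_def)
    show ?thesis unfolding eq using assms(2) by simp
  qed
  have eq: "(\<lambda>a'. if a' = a \<and> madd a b = e then 1 else (0::'k)) =
      (\<lambda>a'. if a' = a then (if madd a b = e then 1 else 0) else 0)"
    by auto
  show ?thesis
    unfolding mulA_def inner eq using assms(1) by simp
qed

lemma twist_mon_apply_zerom:
  assumes "0 < p" "c \<in> tmonos r p" "d \<in> tmonos r p"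
  shows "twist_mon r p (c, d) (zerom, b) = (if b \<in> tmonos r p \<and> madd c d = b then 1 else (0::'k::comm_ring_1))"
proof -
  have "twist_mon r p (c, d) (zerom, b) = mul2 r p (tmon2 r p (zerom, d)) (Dmon r p c) (zerom, b)"
    by (simp add: twist_mon_def mul2_comm[of r p "Dmon r p c"])
  also have "\<dots> = (if (zerom, b) \<in> T2 r p \<and> d \<le> b then Dmon r p c (zerom, b - d) else (0::'k))"
    by (simp add: mul2_tmon2_left sum_tmon2_shift mult.commute)
  also have "\<dots> = (if b \<in> tmonos r p \<and> madd c d = b then 1 else 0)"
    using assms madd_eq_iff[of d c b] by (auto simp: Dmon_apply madd_comm)
  finally show ?thesis .
qed

text \<open>The coordinates of \<open>twist r p \<alpha>\<close> on \<open>1 \<otimes> A\<close> are those of \<open>\<mu>(\<alpha>)\<close>, since the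
  counit kills everything in \<open>\<Delta>(x\<^sup>a)\<close> except \<open>1 \<otimes> x\<^sup>a\<close>.\<close>

lemma twist_apply_zerom: "0 < p \<Longrightarrow> twist r p \<alpha> (zerom, b) = (mu r p \<alpha> b :: 'k::comm_ring_1)"
  unfolding mu_def twist_eq_sum
  by (rule sum.cong) (auto simp: twist_mon_apply_zerom mulA_mon_mon)

theorem comparison_twist:
  assumes p: "prime p" "p = CHAR('k::comm_ring_1)"
  shows "comparison r p (\<lambda>n (w :: 'k cx) J. twist r p (w J))"
proof -
  have p0: "0 < p" using p prime_gt_0_nat by blast
  show ?thesis
    unfolding comparison_def
  proof (intro conjI allI ballI)
    fix n and w :: "'k cx" assume "w \<in> cx r p n"
    then show "(\<lambda>J. twist r p (w J)) \<in> cx r p n" by (simp add: cx_def)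
  next
    fix n and w v :: "'k cx"
    show "(\<lambda>J. twist r p (addC w v J)) = addC (\<lambda>J. twist r p (w J)) (\<lambda>J. twist r p (v J))"
      by (simp add: addC_def twist_add[OF p0])
  next
    fix n and w :: "'k cx" and \<alpha> :: "'k alg2"
    show "(\<lambda>J. twist r p (actQ r p \<alpha> w J)) = actC r p \<alpha> (\<lambda>J. twist r p (w J))"
      by (simp add: actQ_def actC_def twist_mul2[OF p])
  next
    fix n and w :: "'k cx"
    show "dP r p (\<lambda>J. twist r p (w J)) = (\<lambda>J. twist r p (dQ r p w J))"
      by (rule dP_twist[OF p])
  next
    fix w :: "'k cx"
    show "epsP (\<lambda>J. twist r p (w J)) = muQ r p w"
      by (rule ext) (simp add: epsP_def muQ_def twist_apply_zerom[OF p0])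
  qed
qed

section \<open>Low-degree components of an arbitrary comparison map\<close>

definition free_gen :: "mono \<Rightarrow> ('k::comm_ring_1) cx" where
  "free_gen K = (\<lambda>J. if J = K then one2 else (\<lambda>_. 0))"

definition sum_cx :: "'a set \<Rightarrow> ('a \<Rightarrow> ('k::comm_ring_1) cx) \<Rightarrow> 'k cx" where
  "sum_cx S F = (\<lambda>J e. \<Sum>K\<in>S. F K J e)"

lemma free_gen_in_cx: "0 < p \<Longrightarrow> K \<in> idx r n \<Longrightarrow> free_gen K \<in> cx r p n"
  by (auto simp: free_gen_def cx_def)

lemma actQ_in_cx: "w \<in> cx r p n \<Longrightarrow> actQ r p \<alpha> w \<in> cx r p n"
  by (auto simp: actQ_def cx_def)

lemma cx_in_alg2: "w \<in> cx r p n \<Longrightarrow> w J \<in> alg2 r p"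
  by (simp add: cx_def)

lemma cx_out: "w \<in> cx r p n \<Longrightarrow> J \<notin> idx r n \<Longrightarrow> w J e = 0"
  by (simp add: cx_def)

lemma sum_cx_in_cx: "(\<And>K. K \<in> S \<Longrightarrow> F K \<in> cx r p n) \<Longrightarrow> sum_cx S F \<in> cx r p n"
  unfolding cx_def sum_cx_def
proof (intro CollectI conjI allI impI)
  fix J
  assume "\<And>K. K \<in> S \<Longrightarrow> F K \<in> {w. (\<forall>J. J \<notin> idx r n \<longrightarrow> w J = (\<lambda>_. 0)) \<and> (\<forall>J. w J \<in> alg2 r p)}"
  then have F: "\<And>K. K \<in> S \<Longrightarrow> F K \<in> cx r p n" by (simp add: cx_def)
  show "(\<lambda>e. \<Sum>K\<in>S. F K J e) = (\<lambda>_. 0)" if "J \<notin> idx r n"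
    using F cx_out that by (intro ext sum.neutral) blast
  show "(\<lambda>e. \<Sum>K\<in>S. F K J e) \<in> alg2 r p"
    unfolding alg2_def
  proof (intro CollectI allI impI)
    fix e assume "e \<notin> T2 r p"
    then show "(\<Sum>K\<in>S. F K J e) = 0"
      by (intro sum.neutral) (use F alg2_out[OF cx_in_alg2] in blast)
  qed
qed

lemma comparison_in_cx: "comparison r p \<Psi> \<Longrightarrow> w \<in> cx r p n \<Longrightarrow> \<Psi> n w \<in> cx r p n"
  by (simp add: comparison_def)

lemma comparison_chain:
  "comparison r p \<Psi> \<Longrightarrow> w \<in> cx r p (Suc n) \<Longrightarrow> dP r p (\<Psi> (Suc n) w) = \<Psi> n (dQ r p w)"
  by (simp add: comparison_def)

lemma comparison_zero:
  assumes "comparison r p \<Psi>"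
  shows "\<Psi> n (\<lambda>J e. 0) = (\<lambda>J e. (0::'k::comm_ring_1))"
proof -
  have "(\<lambda>J e. 0::'k) \<in> cx r p n" by (simp add: cx_def)
  moreover have "addC (\<lambda>J e. 0::'k) (\<lambda>J e. 0) = (\<lambda>J e. 0)" by (simp add: addC_def)
  ultimately have "\<Psi> n (\<lambda>J e. 0) = addC (\<Psi> n (\<lambda>J e. 0)) (\<Psi> n (\<lambda>J e. 0))"
    using assms unfolding comparison_def by metis
  then have "\<Psi> n (\<lambda>J e. 0) J e = addC (\<Psi> n (\<lambda>J e. 0)) (\<Psi> n (\<lambda>J e. 0)) J e" for J e
    by (rule fun_cong[OF fun_cong])
  then have "\<Psi> n (\<lambda>J e. 0) J e = \<Psi> n (\<lambda>J e. 0) J e + \<Psi> n (\<lambda>J e. 0) J e" for J e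
    by (simp add: addC_def)
  then show ?thesis by (intro ext) simp
qed

lemma comparison_sum_cx:
  assumes c: "comparison r p \<Psi>" and "finite S" and F: "\<And>K. K \<in> S \<Longrightarrow> F K \<in> cx r p n"
  shows "\<Psi> n (sum_cx S F) = sum_cx S (\<lambda>K. \<Psi> n (F K :: 'k::comm_ring_1 cx))"
  using \<open>finite S\<close> F
proof (induction S rule: finite_induct)
  case empty
  then show ?case using comparison_zero[OF c] by (simp add: sum_cx_def)
next
  case (insert a S)
  have sum_cx_insert: "sum_cx (insert a S) G = addC (G a) (sum_cx S G)" for G :: "_ \<Rightarrow> 'k cx"
    using insert.hyps by (simp add: sum_cx_def addC_def)
  have "\<Psi> n (addC (F a) (sum_cx S F)) = addC (\<Psi> n (F a)) (\<Psi> n (sum_cx S F))"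
    using c insert.prems sum_cx_in_cx[of S F r p n] unfolding comparison_def by auto
  then show ?case using insert by (simp add: sum_cx_insert)
qed

lemma cx_decompose:
  assumes "0 < p" and v: "v \<in> cx r p n"
  shows "v = sum_cx (idx r n) (\<lambda>K. actQ r p (v K) (free_gen K :: 'k::comm_ring_1 cx))"
proof (intro ext)
  fix J e
  have "sum_cx (idx r n) (\<lambda>K. actQ r p (v K) (free_gen K :: 'k cx)) J e =
      (\<Sum>K\<in>idx r n. if K = J then mul2 r p (v J) one2 e else 0)"
    unfolding sum_cx_def actQ_def free_gen_def by (rule sum.cong) auto
  also have "\<dots> = v J e"
    using v cx_out[OF v] cx_in_alg2[OF v] assms(1)
    by (auto simp: one2_eq_tmon2[where r=r] mul2_comm[of r p "v J"] mul2_one_left)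
  finally show "v J e = sum_cx (idx r n) (\<lambda>K. actQ r p (v K) (free_gen K :: 'k cx)) J e" by simp
qed

lemma comparison_decompose:
  assumes c: "comparison r p \<Psi>" and p0: "0 < p" and v: "v \<in> cx r p n"
  shows "\<Psi> n v = (\<lambda>J e. \<Sum>K\<in>idx r n. mul2 r p (twist r p (v K)) (\<Psi> n (free_gen K) J) e :: 'k::comm_ring_1)"
proof -
  have act: "\<Psi> n (actQ r p (v K) (free_gen K)) = actC r p (v K) (\<Psi> n (free_gen K))"
    if "K \<in> idx r n" for K
    using c cx_in_alg2[OF v] free_gen_in_cx[OF p0 that] unfolding comparison_def by blast
  have "\<Psi> n v = \<Psi> n (sum_cx (idx r n) (\<lambda>K. actQ r p (v K) (free_gen K)))"
    using cx_decompose[OF p0 v] by metis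
  also have "\<dots> = sum_cx (idx r n) (\<lambda>K. \<Psi> n (actQ r p (v K) (free_gen K)))"
    by (rule comparison_sum_cx[OF c finite_idx]) (simp add: actQ_in_cx free_gen_in_cx[OF p0])
  finally show ?thesis by (simp add: sum_cx_def act actC_def cong: sum.cong)
qed

lemma dQ_in_cx:
  assumes w: "w \<in> cx r p (Suc n)"
  shows "dQ r p w \<in> cx r p n"
  unfolding cx_def
proof (intro CollectI conjI allI impI)
  fix J assume J: "J \<notin> idx r n"
  have "madd J (unitv i) \<notin> idx r (Suc n)" if "i < r" for i
  proof
    assume h: "madd J (unitv i) \<in> idx r (Suc n)"
    have "\<forall>j. r \<le> j \<longrightarrow> J j = 0" using h that by (auto simp: idx_def madd_def unitv_def)
    moreover have "(\<Sum>j<r. madd J (unitv i) j) = (\<Sum>j<r. J j) + 1"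
      using sum_unitv[OF that] by (simp add: madd_def sum.distrib)
    ultimately show False using J h by (simp add: idx_def)
  qed
  then have "\<And>i. i < r \<Longrightarrow> w (madd J (unitv i)) = (\<lambda>_. 0)" using w by (simp add: cx_def)
  then show "dQ r p w J = (\<lambda>_. 0)"
    unfolding dQ_def by (intro ext sum.neutral ballI) simp
next
  fix J
  show "dQ r p w J \<in> alg2 r p"
    unfolding alg2_def dQ_def
  proof (intro CollectI allI impI sum.neutral ballI)
    fix ab i assume "ab \<notin> T2 r p"
    then show "ksign J i * mul2 r p (coefQ r p i (J i)) (w (madd J (unitv i))) ab = 0"
      by (simp add: alg2_out[OF mul2_in_alg2])
  qed
qed

definition coefP_exp :: "nat \<Rightarrow> nat \<Rightarrow> nat \<Rightarrow> mono" where
  "coefP_exp p m j = (\<lambda>t. (if even j then 1 else p - 1) * unitv m t)"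

lemma coefP_eq_tmon2:
  "m < r \<Longrightarrow> 1 < p \<Longrightarrow> coefP r p m j = (tmon2 r p (coefP_exp p m j, zerom) :: 'k::comm_ring_1 alg2)"
  by (auto simp: coefP_def coefP_exp_def pow2_tmon2 mon2_eq_tmon2[where r=r and p=p])

lemma coefP_exp_le_imp: "m < r \<Longrightarrow> 1 < p \<Longrightarrow> coefP_exp p m j \<le> x \<Longrightarrow> 1 \<le> x m"
  unfolding coefP_exp_def le_fun_def by (drule spec[of _ m]) (auto simp: unitv_def split: if_splits)

lemma coefP_exp_in_tmonos: "m < r \<Longrightarrow> 1 < p \<Longrightarrow> coefP_exp p m j \<in> tmonos r p"
  by (auto simp: coefP_exp_def tmonos_def unitv_def)

lemma coefP_exp_zero: "coefP_exp p m 0 = unitv m"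
  by (simp add: coefP_exp_def fun_eq_iff)

lemma coefP_exp_outside: "t \<noteq> m \<Longrightarrow> coefP_exp p m j t = 0"
  by (simp add: coefP_exp_def unitv_def)

lemma le_coefP_exp_minus_unitv:
  assumes "unitv i \<le> y" "y \<le> coefP_exp p i j"
  shows "\<forall>t. t \<noteq> i \<longrightarrow> (y - unitv i) t = 0" and "madd (y - unitv i) (unitv i) = y"
proof -
  show "\<forall>t. t \<noteq> i \<longrightarrow> (y - unitv i) t = 0"
  proof (intro allI impI)
    fix t assume "t \<noteq> i"
    moreover have "y t \<le> coefP_exp p i j t" using assms(2) by (simp add: le_fun_def)
    ultimately show "(y - unitv i) t = 0" using coefP_exp_outside[of t i p j] by simp
  qed
  show "madd (y - unitv i) (unitv i) = y"
    using assms(1) by (simp add: madd_def le_fun_def fun_eq_iff)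
qed

lemma ksign_zerom [simp]: "ksign zerom l = 1"
  by (simp add: ksign_def zerom_def)

lemma ksign_unitv_self: "ksign (unitv i) i = 1"
  by (simp add: ksign_def unitv_def)

lemma mu_one2: "0 < p \<Longrightarrow> mu r p one2 b = (if b = zerom then 1 else (0::'k::comm_ring_1))"
  by (simp add: mu_def one2_eq_tmon2[where r=r] sum_tmon2_mult mulA_mon_mon)

lemma mu_out: "b \<notin> tmonos r p \<Longrightarrow> mu r p u b = (0::'k::comm_ring_1)"
  by (simp add: mu_def mulA_def)

lemma mul2_dP_left: "mul2 r p (dP r p X J) Y = (dP r p (\<lambda>K. mul2 r p (X K) Y) J :: 'k::comm_ring_1 alg2)"
proof
  fix e
  have "dP r p X J = (\<lambda>ab. \<Sum>l<r. ksign J l * mul2 r p (coefP r p l (J l)) (X (madd J (unitv l))) ab)"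
    by (simp add: dP_def)
  then show "mul2 r p (dP r p X J) Y e = dP r p (\<lambda>K. mul2 r p (X K) Y) J e"
    by (simp add: mul2_sum_left mul2_assoc dP_def)
qed

text \<open>Evaluations of \<open>d\<^sub>P\<close> at coordinates where only one summand can contribute.  They
  let the chain-map equation be read backwards, expressing the relevant coordinates
  of \<open>\<Psi>\<^sub>n\<^sub>+\<^sub>1\<close> through \<open>\<Psi>\<^sub>n\<close>.\<close>

lemma dP_zerom_apply:
  assumes i: "i < r" and p1: "1 < p" and x: "\<forall>t. t \<noteq> i \<longrightarrow> x t = 0"
    and xT: "madd x (unitv i) \<in> tmonos r p" and d: "d \<in> tmonos r p"
  shows "dP r p X zerom (madd x (unitv i), d) = (X (unitv i) (x, d) :: 'k::comm_ring_1)"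
proof -
  have "dP r p X zerom (madd x (unitv i), d) = (\<Sum>l<r. if l = i then X (unitv i) (x, d) else 0)"
    unfolding dP_def
  proof (rule sum.cong[OF refl])
    fix l assume l: "l \<in> {..<r}"
    then have "coefP r p l (zerom l) = (tmon2 r p (unitv l, zerom) :: 'k alg2)"
      using p1 by (simp add: coefP_eq_tmon2 coefP_exp_def zerom_def)
    moreover have "unitv l \<le> madd x (unitv i) \<longleftrightarrow> l = i"
      using l i x unfolding unitv_le_iff by (auto simp: madd_def unitv_def)
    ultimately show "ksign zerom l * mul2 r p (coefP r p l (zerom l)) (X (madd zerom (unitv l))) (madd x (unitv i), d) =
        (if l = i then X (unitv i) (x, d) else 0)"
      using xT d by (simp add: mul2_tmon2_left_apply madd_minus_cancel)
  qed
  also have "\<dots> = X (unitv i) (x, d)" using i by simp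
  finally show ?thesis .
qed

lemma dP_unitv_apply:
  assumes i: "i < r" and p1: "1 < p" and b: "b \<in> tmonos r p"
  shows "dP r p X (unitv i) (coefP_exp p i 1, b) = (X (madd (unitv i) (unitv i)) (zerom, b) :: 'k::comm_ring_1)"
proof -
  have "dP r p X (unitv i) (coefP_exp p i 1, b) = (\<Sum>l<r. if l = i then X (madd (unitv i) (unitv i)) (zerom, b) else 0)"
    unfolding dP_def
  proof (rule sum.cong[OF refl])
    fix l assume l: "l \<in> {..<r}"
    then have c: "coefP r p l (unitv i l) = (tmon2 r p (coefP_exp p l (unitv i l), zerom) :: 'k alg2)"
      using p1 by (simp add: coefP_eq_tmon2)
    show "ksign (unitv i) l * mul2 r p (coefP r p l (unitv i l)) (X (madd (unitv i) (unitv l))) (coefP_exp p i 1, b) =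
          (if l = i then X (madd (unitv i) (unitv i)) (zerom, b) else 0)"
    proof (cases "l = i")
      case True
      have "coefP_exp p i (unitv i i) = coefP_exp p i 1" by (simp add: unitv_def)
      moreover have "coefP_exp p i 1 - coefP_exp p i 1 = zerom" by (simp add: zerom_def fun_eq_iff)
      ultimately show ?thesis
        using True c i p1 b by (simp add: mul2_tmon2_left_apply coefP_exp_in_tmonos ksign_unitv_self)
    next
      case False
      then have "\<not> coefP_exp p l (unitv i l) \<le> coefP_exp p i 1"
        using coefP_exp_le_imp[of l r p] l p1 coefP_exp_outside[of l i p 1] by fastforce
      then show ?thesis using False c by (simp add: mul2_tmon2_left_apply)
    qed
  qed
  also have "\<dots> = X (madd (unitv i) (unitv i)) (zerom, b)" using i by simp
  finally show ?thesis .
qed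

lemma comparison_deg0_unit:
  assumes c: "comparison r p \<Psi>" and p0: "0 < p"
  shows "\<Psi> 0 (free_gen zerom) zerom \<in> alg2 r p"
    and "\<Psi> 0 (free_gen zerom) zerom (zerom, b) = (if b = zerom then 1 else (0::'k::comm_ring_1))"
proof -
  have E: "(free_gen zerom :: 'k cx) \<in> cx r p 0"
    using free_gen_in_cx[OF p0] idx_zero by blast
  then show "\<Psi> 0 (free_gen zerom) zerom \<in> alg2 r p"
    using c by (auto simp: comparison_def cx_def)
  have "epsP (\<Psi> 0 (free_gen zerom)) b = muQ r p (free_gen zerom :: 'k cx) b"
    using c E by (simp add: comparison_def)
  then show "\<Psi> 0 (free_gen zerom) zerom (zerom, b) = (if b = zerom then 1 else (0::'k))"
    by (simp add: epsP_def muQ_def free_gen_def mu_one2[OF p0])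
qed

lemma mul2_apply_right_unit:
  assumes u: "u \<in> alg2 r p" and u0: "\<And>b'. u (zerom, b') = (if b' = zerom then 1 else (0::'k::comm_ring_1))"
    and b: "b \<in> tmonos r p" and p0: "0 < p"
  shows "mul2 r p z u (zerom, b) = z (zerom, b)"
proof -
  have "mul2 r p z u (zerom, b) = (\<Sum>y\<in>T2 r p. u y *
      (if fst y \<le> zerom \<and> snd y \<le> b then z (zerom - fst y, b - snd y) else 0))"
    using mul2_apply_expand[OF u, of "(zerom, b)" z] b p0 by (simp only: fst_conv snd_conv) simp
  also have "\<dots> = (\<Sum>y\<in>T2 r p. if y = (zerom, zerom) then z (zerom, b) else 0)"
  proof (rule sum.cong[OF refl])
    fix y :: "mono \<times> mono"
    have "fst y \<le> zerom \<longleftrightarrow> fst y = zerom" by (auto simp: le_fun_def zerom_def fun_eq_iff)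
    then show "u y * (if fst y \<le> zerom \<and> snd y \<le> b then z (zerom - fst y, b - snd y) else 0) =
        (if y = (zerom, zerom) then z (zerom, b) else 0)"
      using u0[of "snd y"] by (cases y) auto
  qed
  also have "\<dots> = z (zerom, b)" using b p0 by simp
  finally show ?thesis .
qed

text \<open>In degree 1 the component on \<open>P\<^bsub>e\<^sub>i\<^esub>\<close>, at coordinates \<open>(x, d)\<close> with \<open>x\<close> a power of
  \<open>x\<^sub>i\<close>, is forced by \<open>\<Psi>\<^sub>0\<close>: it is the only contribution to \<open>d\<^sub>P\<close> at \<open>(x x\<^sub>i, d)\<close>.\<close>

lemma comparison_deg1_apply:
  assumes c: "comparison r p \<Psi>" and p: "prime p" "p = CHAR('k::comm_ring_1)"
    and i: "i < r" and v: "v \<in> cx r p (Suc 0)"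
    and x: "\<forall>t. t \<noteq> i \<longrightarrow> x t = 0" and xT: "madd x (unitv i) \<in> tmonos r p" and d: "d \<in> tmonos r p"
  shows "\<Psi> (Suc 0) v (unitv i) (x, d) =
    (mul2 r p (twist r p (v (unitv i))) (\<Psi> 0 (free_gen zerom) zerom) (x, d) :: 'k)"
proof -
  have p0: "0 < p" and p1: "1 < p" using p prime_gt_0_nat prime_gt_1_nat by blast+
  let ?u0 = "\<Psi> 0 (free_gen zerom) zerom"
  have "\<Psi> (Suc 0) v (unitv i) (x, d) = dP r p (\<Psi> (Suc 0) v) zerom (madd x (unitv i), d)"
    by (rule dP_zerom_apply[symmetric, OF i p1 x xT d])
  also have "\<dots> = \<Psi> 0 (dQ r p v) zerom (madd x (unitv i), d)"
    by (simp add: comparison_chain[OF c v])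
  also have "\<dots> = mul2 r p (twist r p (dQ r p v zerom)) ?u0 (madd x (unitv i), d)"
    by (simp add: comparison_decompose[OF c p0 dQ_in_cx[OF v]] idx_zero)
  also have "twist r p (dQ r p v zerom) = dP r p (\<lambda>J. twist r p (v J)) zerom"
    by (simp add: dP_twist[OF p])
  also have "mul2 r p (dP r p (\<lambda>J. twist r p (v J)) zerom) ?u0 = dP r p (\<lambda>K. mul2 r p (twist r p (v K)) ?u0) zerom"
    by (rule mul2_dP_left)
  also have "\<dots> (madd x (unitv i), d) = mul2 r p (twist r p (v (unitv i))) ?u0 (x, d)"
    by (rule dP_zerom_apply[OF i p1 x xT d])
  finally show ?thesis .
qed

lemma comparison_deg1_component:
  assumes c: "comparison r p \<Psi>" and p: "prime p" "p = CHAR('k::comm_ring_1)"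
    and i: "i < r" and w: "w \<in> cx r p (Suc 0)"
  shows "\<Psi> (Suc 0) w (unitv i) (zerom, b) = (mu r p (w (unitv i)) b :: 'k)"
proof (cases "b \<in> tmonos r p")
  case False
  then show ?thesis
    using alg2_out[OF cx_in_alg2[OF comparison_in_cx[OF c w]]] by (simp add: mu_out)
next
  case True
  have p0: "0 < p" and p1: "1 < p" using p prime_gt_0_nat prime_gt_1_nat by blast+
  have "\<forall>t. t \<noteq> i \<longrightarrow> zerom t = 0" by (simp add: zerom_def)
  then have "\<Psi> (Suc 0) w (unitv i) (zerom, b) =
      mul2 r p (twist r p (w (unitv i))) (\<Psi> 0 (free_gen zerom) zerom) (zerom, b)"
    by (intro comparison_deg1_apply[OF c p i w]) (use i p1 True in simp_all)
  also have "\<dots> = twist r p (w (unitv i)) (zerom, b)"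
    by (rule mul2_apply_right_unit[OF comparison_deg0_unit[OF c p0] True p0])
  also have "\<dots> = mu r p (w (unitv i)) b"
    by (rule twist_apply_zerom[OF p0])
  finally show ?thesis .
qed

lemma comparison_deg1_free_gen_self:
  assumes c: "comparison r p \<Psi>" and p: "prime p" "p = CHAR('k::comm_ring_1)" and i: "i < r"
  shows "\<Psi> (Suc 0) (free_gen (unitv i)) (unitv i) (zerom, d) = (if d = zerom then 1 else (0 :: 'k))"
proof -
  have p0: "0 < p" using p prime_gt_0_nat by blast
  show ?thesis
    using comparison_deg1_component[OF c p i free_gen_in_cx[OF p0 unitv_in_idx_one[OF i]], of d]
    by (simp add: free_gen_def mu_one2[OF p0])
qed

lemma comparison_deg1_free_gen_other:
  assumes c: "comparison r p \<Psi>" and p: "prime p" "p = CHAR('k::comm_ring_1)"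
    and i: "i < r" and j: "j < r" "j \<noteq> i"
    and x: "\<forall>t. t \<noteq> i \<longrightarrow> x t = 0" and xT: "madd x (unitv i) \<in> tmonos r p" and d: "d \<in> tmonos r p"
  shows "\<Psi> (Suc 0) (free_gen (unitv j)) (unitv i) (x, d) = (0 :: 'k)"
proof -
  have p0: "0 < p" using p prime_gt_0_nat by blast
  have "unitv i \<noteq> unitv j" using j by (auto simp: unitv_def fun_eq_iff)
  then have "(free_gen (unitv j) :: 'k cx) (unitv i) = (\<lambda>_. 0)"
    by (simp add: free_gen_def)
  then show ?thesis
    using comparison_deg1_apply[OF c p i free_gen_in_cx[OF p0 unitv_in_idx_one[OF j(1)]] x xT d] by simp
qed

lemma mul2_coefP_deg1_free_gen_apply:
  assumes c: "comparison r p \<Psi>" and p: "prime p" "p = CHAR('k::comm_ring_1)"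
    and i: "i < r" and j: "j < r" and m: "m < r"
    and yT: "y \<in> T2 r p" and y_le: "fst y \<le> coefP_exp p i 1"
  shows "mul2 r p (coefP r p m (unitv j m)) (\<Psi> (Suc 0) (free_gen (unitv j)) (unitv i)) y =
    (if j = i \<and> m = i \<and> y = (coefP_exp p i 1, zerom) then 1 else (0::'k))"
proof -
  have p0: "0 < p" and p1: "1 < p" using p prime_gt_0_nat prime_gt_1_nat by blast+
  obtain y1 y2 where y: "y = (y1, y2)" by (cases y)
  define V where "V = \<Psi> (Suc 0) (free_gen (unitv j)) (unitv i)"
  define pe where "pe = coefP_exp p i 1"
  define cmj where "cmj = coefP_exp p m (unitv j m)"
  have y1: "y1 \<in> tmonos r p" "y1 \<le> pe" using yT y_le by (simp_all add: y pe_def)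
  have pe_out: "pe t = 0" if "t \<noteq> i" for t
    using that by (simp add: pe_def coefP_exp_outside)
  have Y: "mul2 r p (coefP r p m (unitv j m)) V y = (if cmj \<le> y1 then V (y1 - cmj, y2) else 0)"
    using yT m p1 by (simp add: y coefP_eq_tmon2 cmj_def mul2_tmon2_left_apply)
  show ?thesis
  proof (cases "cmj \<le> y1")
    case False
    moreover have "cmj = pe" if "j = i" "m = i"
      using that by (simp add: cmj_def pe_def unitv_def)
    ultimately show ?thesis using Y by (auto simp: y V_def pe_def)
  next
    case cmj: True
    have "1 \<le> y1 m" using coefP_exp_le_imp[OF m p1] cmj by (simp add: cmj_def)
    moreover have "y1 m \<le> pe m" using y1(2) by (simp add: le_fun_def)
    ultimately have mi: "m = i" using pe_out by fastforce
    show ?thesis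
    proof (cases "j = i")
      case True
      then have cmj_pe: "cmj = pe" using mi by (simp add: cmj_def pe_def unitv_def)
      then have y1_pe: "y1 = pe" using cmj y1(2) by simp
      then have "y1 - cmj = zerom" using cmj_pe by (simp add: zerom_def fun_eq_iff)
      then show ?thesis
        using Y comparison_deg1_free_gen_self[OF c p i] True mi y1_pe cmj_pe by (simp add: y V_def pe_def)
    next
      case False
      then have cmj_eq: "cmj = unitv i" using mi by (simp add: cmj_def unitv_def coefP_exp_zero)
      then have "unitv i \<le> y1" using cmj by simp
      note y1_split = le_coefP_exp_minus_unitv[OF this y1(2)[unfolded pe_def]]
      have "madd (y1 - unitv i) (unitv i) \<in> tmonos r p" using y1_split(2) y1(1) by (simp only:)
      moreover have "y2 \<in> tmonos r p" using yT by (simp add: y)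
      ultimately have "V (y1 - unitv i, y2) = 0"
        unfolding V_def by (rule comparison_deg1_free_gen_other[OF c p i j False y1_split(1)])
      then show ?thesis using Y cmj cmj_eq False by (simp add: V_def)
    qed
  qed
qed

text \<open>In degree 2 the component on \<open>P\<^bsub>2e\<^sub>i\<^esub>\<close> is the only contribution to \<open>d\<^sub>P\<close> at the
  coordinate \<open>(x\<^sub>i\<^sup>p\<^sup>-\<^sup>1, b)\<close> of \<open>P\<^bsub>e\<^sub>i\<^esub>\<close>; on the other side of the chain-map equation the
  only surviving term of \<open>\<Psi>\<^sub>1 \<circ> d\<^sub>Q\<close> comes from \<open>Q\<^bsub>2e\<^sub>i\<^esub>\<close> via its value on the generator of \<open>Q\<^bsub>e\<^sub>i\<^esub>\<close>.\<close>

lemma mul2_coefP_deg1_free_gen_top: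
  assumes c: "comparison r p \<Psi>" and p: "prime p" "p = CHAR('k::comm_ring_1)"
    and i: "i < r" and j: "j < r" and m: "m < r" and b: "b \<in> tmonos r p"
  shows "mul2 r p z (mul2 r p (coefP r p m (unitv j m)) (\<Psi> (Suc 0) (free_gen (unitv j)) (unitv i)))
      (coefP_exp p i 1, b) = (if j = i \<and> m = i then z (zerom, b) else (0::'k))"
proof -
  have p0: "0 < p" and p1: "1 < p" using p prime_gt_0_nat prime_gt_1_nat by blast+
  let ?pe = "coefP_exp p i 1"
  let ?Y = "mul2 r p (coefP r p m (unitv j m)) (\<Psi> (Suc 0) (free_gen (unitv j)) (unitv i))"
  have pt: "(?pe, b) \<in> T2 r p" using coefP_exp_in_tmonos[OF i p1] b by simp
  have "mul2 r p z ?Y (?pe, b) = (\<Sum>y\<in>T2 r p. ?Y y *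
      (if fst y \<le> ?pe \<and> snd y \<le> b then z (?pe - fst y, b - snd y) else 0))"
    using mul2_apply_expand[OF mul2_in_alg2 pt, of z] by (simp only: fst_conv snd_conv)
  also have "\<dots> = (\<Sum>y\<in>T2 r p. if y = (?pe, zerom) then (if j = i \<and> m = i then z (zerom, b) else 0) else 0)"
  proof (rule sum.cong[OF refl])
    fix y assume yT: "y \<in> T2 r p"
    have "?pe - ?pe = zerom" by (simp add: zerom_def fun_eq_iff)
    then show "?Y y * (if fst y \<le> ?pe \<and> snd y \<le> b then z (?pe - fst y, b - snd y) else 0) =
        (if y = (?pe, zerom) then (if j = i \<and> m = i then z (zerom, b) else 0) else 0)"
      using mul2_coefP_deg1_free_gen_apply[OF c p i j m yT]
      by (cases "fst y \<le> ?pe \<and> snd y \<le> b") auto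
  qed
  also have "\<dots> = (if j = i \<and> m = i then z (zerom, b) else 0)"
    using pt p0 by simp
  finally show ?thesis .
qed

lemma comparison_deg2_component:
  assumes c: "comparison r p \<Psi>" and p: "prime p" "p = CHAR('k::comm_ring_1)"
    and i: "i < r" and w: "w \<in> cx r p (Suc (Suc 0))"
  shows "\<Psi> (Suc (Suc 0)) w (madd (unitv i) (unitv i)) (zerom, b) = (mu r p (w (madd (unitv i) (unitv i))) b :: 'k)"
proof (cases "b \<in> tmonos r p")
  case False
  then show ?thesis
    using alg2_out[OF cx_in_alg2[OF comparison_in_cx[OF c w]]] by (simp add: mu_out)
next
  case b: True
  have p0: "0 < p" and p1: "1 < p" using p prime_gt_0_nat prime_gt_1_nat by blast+
  let ?pt = "(coefP_exp p i 1, b)" and ?Tw = "\<lambda>J. twist r p (w J)"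
    and ?V = "\<lambda>j. \<Psi> (Suc 0) (free_gen (unitv j)) (unitv i)"
  have "\<Psi> (Suc (Suc 0)) w (madd (unitv i) (unitv i)) (zerom, b) = dP r p (\<Psi> (Suc (Suc 0)) w) (unitv i) ?pt"
    by (rule dP_unitv_apply[symmetric, OF i p1 b])
  also have "\<dots> = \<Psi> (Suc 0) (dQ r p w) (unitv i) ?pt"
    by (simp add: comparison_chain[OF c w])
  also have "\<dots> = (\<Sum>j<r. mul2 r p (twist r p (dQ r p w (unitv j))) (?V j) ?pt)"
    by (simp add: comparison_decompose[OF c p0 dQ_in_cx[OF w]] idx_one sum.reindex[OF inj_on_unitv])
  also have "\<dots> = (\<Sum>j<r. \<Sum>m<r. ksign (unitv j) m *
      mul2 r p (?Tw (madd (unitv j) (unitv m))) (mul2 r p (coefP r p m (unitv j m)) (?V j)) ?pt)"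
  proof (rule sum.cong[OF refl])
    fix j
    have "twist r p (dQ r p w (unitv j)) = dP r p ?Tw (unitv j)"
      using dP_twist[OF p, of r w] by (simp add: fun_eq_iff)
    then have "mul2 r p (twist r p (dQ r p w (unitv j))) (?V j) = dP r p (\<lambda>K. mul2 r p (?Tw K) (?V j)) (unitv j)"
      by (simp add: mul2_dP_left)
    then show "mul2 r p (twist r p (dQ r p w (unitv j))) (?V j) ?pt = (\<Sum>m<r. ksign (unitv j) m *
        mul2 r p (?Tw (madd (unitv j) (unitv m))) (mul2 r p (coefP r p m (unitv j m)) (?V j)) ?pt)"
      by (simp add: dP_def mul2_left_comm)
  qed
  also have "\<dots> = (\<Sum>j<r. \<Sum>m<r. if j = i \<and> m = i then
      ksign (unitv j) m * ?Tw (madd (unitv j) (unitv m)) (zerom, b) else 0)"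
  proof (intro sum.cong refl)
    fix j m assume "j \<in> {..<r}" "m \<in> {..<r}"
    then show "ksign (unitv j) m *
        mul2 r p (?Tw (madd (unitv j) (unitv m))) (mul2 r p (coefP r p m (unitv j m)) (?V j)) ?pt =
      (if j = i \<and> m = i then ksign (unitv j) m * ?Tw (madd (unitv j) (unitv m)) (zerom, b) else 0)"
      using mul2_coefP_deg1_free_gen_top[OF c p i _ _ b, of j m] by simp
  qed
  also have "\<dots> = mu r p (w (madd (unitv i) (unitv i))) b"
    using i by (simp add: sum2_delta ksign_unitv_self twist_apply_zerom[OF p0])
  finally show ?thesis .
qed

section \<open>The pulled-back cocycles\<close>

lemma actA_zero: "actA r p \<alpha> (\<lambda>_. 0) = (\<lambda>_. 0 :: 'k::comm_ring_1)"
proof -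
  have "mulA r p x (\<lambda>_. 0) = (\<lambda>_. 0)" "mulA r p (\<lambda>_. 0) x = (\<lambda>_. 0 :: 'k)" for x :: "'k alg"
    unfolding mulA_def by (intro ext; simp add: sum.neutral)+
  then show ?thesis by (simp add: actA_def)
qed

lemma homQ_zero: "homQ r p m (\<lambda>_ _. (0::'k::comm_ring_1))"
  by (simp add: homQ_def algA_def actA_zero)

lemma cohomologous_if_eq_on_cx:
  "(\<And>w. w \<in> cx r p n \<Longrightarrow> f w = g w) \<Longrightarrow> cohomologous r p n f (g :: 'k::comm_ring_1 cx \<Rightarrow> 'k alg)"
  unfolding cohomologous_def using homQ_zero by fastforce

lemma tensorA_single_cochain:
  assumes "J0 \<in> idx r n" "0 < p"
    and "\<And>J a. f (single J (mon a)) = (if J = J0 \<and> a = zerom then 1 else (0::'k::comm_ring_1))"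
  shows "tensorA r p n f X = (\<lambda>b. X J0 (zerom, b))"
proof
  fix b
  have "tensorA r p n f X b = (\<Sum>J\<in>idx r n. \<Sum>a\<in>tmonos r p. if J = J0 \<and> a = zerom then X J (a, b) else 0)"
    unfolding tensorA_def assms(3) by (intro sum.cong refl) simp
  also have "\<dots> = X J0 (zerom, b)"
    using assms(1,2) by (simp add: sum2_delta)
  finally show "tensorA r p n f X b = X J0 (zerom, b)" .
qed

lemma eta_hat_single: "eta_hat i (single J (mon a)) = (if J = unitv i \<and> a = zerom then 1 else (0::'k::{zero,one}))"
  by (auto simp: eta_hat_def single_def mon_def)

lemma zeta_hat_single:
  "zeta_hat i (single J (mon a)) = (if J = madd (unitv i) (unitv i) \<and> a = zerom then 1 else (0::'k::{zero,one}))"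
  by (auto simp: zeta_hat_def single_def mon_def double_unitv)

lemma tensorA_eta_hat_eq_delta_hat:
  assumes c: "comparison r p \<Psi>" and p: "prime p" "p = CHAR('k::comm_ring_1)"
    and i: "i < r" and w: "w \<in> cx r p 1"
  shows "tensorA r p 1 (eta_hat i :: 'k pel \<Rightarrow> 'k) (\<Psi> 1 w) = delta_hat r p i w"
proof -
  have "0 < p" using p prime_gt_0_nat by blast
  then have "tensorA r p 1 (eta_hat i :: 'k pel \<Rightarrow> 'k) (\<Psi> 1 w) = (\<lambda>b. \<Psi> 1 w (unitv i) (zerom, b))"
    using unitv_in_idx_one[OF i] by (intro tensorA_single_cochain) (simp_all add: eta_hat_single)
  then show ?thesis
    using comparison_deg1_component[OF c p i] w by (simp add: delta_hat_def)
qed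

lemma tensorA_zeta_hat_eq_chi_hat:
  assumes c: "comparison r p \<Psi>" and p: "prime p" "p = CHAR('k::comm_ring_1)"
    and i: "i < r" and w: "w \<in> cx r p 2"
  shows "tensorA r p 2 (zeta_hat i :: 'k pel \<Rightarrow> 'k) (\<Psi> 2 w) = chi_hat r p i w"
proof -
  have "0 < p" using p prime_gt_0_nat by blast
  then have "tensorA r p 2 (zeta_hat i :: 'k pel \<Rightarrow> 'k) (\<Psi> 2 w) =
      (\<lambda>b. \<Psi> 2 w (madd (unitv i) (unitv i)) (zerom, b))"
    using double_unitv_in_idx_two[OF i]
    by (intro tensorA_single_cochain) (simp_all add: zeta_hat_single numeral_2_eq_2)
  then show ?thesis
    using comparison_deg2_component[OF c p i] w unfolding chi_hat_def double_unitv
    by (simp add: numeral_2_eq_2)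
qed

theorem theorem4p2:
  fixes r :: nat
  assumes "CHAR('k::field) > 0"
  shows "(\<exists>\<Psi> :: nat \<Rightarrow> 'k cx \<Rightarrow> 'k cx. comparison r CHAR('k) \<Psi>) \<and>
    (\<forall>\<Psi> :: nat \<Rightarrow> 'k cx \<Rightarrow> 'k cx. comparison r CHAR('k) \<Psi> \<longrightarrow>
      (\<forall>i<r.
         cohomologous r CHAR('k) 1
           (\<lambda>w. tensorA r CHAR('k) 1 (eta_hat i :: 'k pel \<Rightarrow> 'k) (\<Psi> 1 w))
           (delta_hat r CHAR('k) i) \<and>
         cohomologous r CHAR('k) 2
           (\<lambda>w. tensorA r CHAR('k) 2 (zeta_hat i :: 'k pel \<Rightarrow> 'k) (\<Psi> 2 w))
           (chi_hat r CHAR('k) i)))"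
proof -
  have p: "prime CHAR('k)" by (rule prime_CHAR_semidom[OF assms])
  have "cohomologous r CHAR('k) 1
           (\<lambda>w. tensorA r CHAR('k) 1 (eta_hat i :: 'k pel \<Rightarrow> 'k) (\<Psi> 1 w)) (delta_hat r CHAR('k) i) \<and>
        cohomologous r CHAR('k) 2
           (\<lambda>w. tensorA r CHAR('k) 2 (zeta_hat i :: 'k pel \<Rightarrow> 'k) (\<Psi> 2 w)) (chi_hat r CHAR('k) i)"
    if "comparison r CHAR('k) \<Psi>" "i < r" for \<Psi> :: "nat \<Rightarrow> 'k cx \<Rightarrow> 'k cx" and i
    using tensorA_eta_hat_eq_delta_hat[OF that(1) p refl that(2)]
      tensorA_zeta_hat_eq_chi_hat[OF that(1) p refl that(2)]
    by (simp add: cohomologous_if_eq_on_cx)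
  then show ?thesis
    using comparison_twist[OF p refl] by blast
qed

end
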